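(* Let $q$ be a complex number with $0<|q|<1$. For $z\in\mathbb{C}^*$ generic (i.e. avoiding the poles of the functions below), \begin{align*} & z\, j(z^{-1}q;q)\, m(q,q^3,z) + z\, j(z^{-2}q;q)\, m(z^3q,q^3,z^{-1}) + z^2 j(zq;q)\, m(q,q^3,z^{-1}) + z^2 j(z^{2}q;q)\, m(z^{-3}q,q^3,z)\\ &= - j(z^2;q)\, m(z^{-3}q,q^3,z^2) + z\, j(z^2;q)\, m(z^3q,q^3,z^{-2}). \end{align*}
   Context: For $|q|<1$, $(a;q)_\infty=\prod_{n\ge 0}(1-aq^n)$ and $j(z;q):=(z;q)_\infty(z^{-1}q;q)_\infty(q;q)_\infty=\sum_{n\in\mathbb{Z}}(-1)^n z^n q^{n(n-1)/2}$. The Appell–Lerch function is $$m(x,q,z):=\frac{1}{j(z;q)}\sum_{r=-\infty}^{\infty}\frac{(-1)^rq^{\binom{r}{2}}z^r}{1-q^{r-1}xz},$$ defined for $x,z\in\mathbb{C}^*$ with $j(z;q)\neq 0$ and no vanishing denominators. *)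

theory Defs
  imports "HOL-Analysis.Analysis"
begin

definition qpoch :: "complex \<Rightarrow> complex \<Rightarrow> complex" where
  "qpoch a q = (\<Prod>n. (1 - a * q ^ n))"

definition jtheta :: "complex \<Rightarrow> complex \<Rightarrow> complex" where
  "jtheta z q = qpoch z q * qpoch (q / z) q * qpoch q q"

text \<open>Note binomial(r,2) = r(r-1)/2 is a nonnegative integer for every integer r.\<close>
definition appell_m :: "complex \<Rightarrow> complex \<Rightarrow> complex \<Rightarrow> complex" where
  "appell_m x q z = (1 / jtheta z q) *
     (\<Sum>\<^sub>\<infinity>r\<in>(UNIV::int set).
        (-1) powi r * q ^ nat (r * (r - 1) div 2) * z powi r / (1 - q powi (r - 1) * x * z))"

definition m_defined :: "complex \<Rightarrow> complex \<Rightarrow> complex \<Rightarrow> bool" where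
  "m_defined x q z \<longleftrightarrow> x \<noteq> 0 \<and> z \<noteq> 0 \<and> jtheta z q \<noteq> 0 \<and>
     (\<forall>r::int. 1 - q powi (r - 1) * x * z \<noteq> 0)"

end

(* Everything rests on the change-of-z formula for the Appell-Lerch function,
     m(x,p,z1) - m(x,p,z0) = z0 (p;p)^3 j(z1/z0) j(x z0 z1) / (j(z0) j(z1) j(x z0) j(x z1)).
   Regarded as a function of x, the difference F of its two sides satisfies F(p x) = -x F(x):
   for m this holds because the theta series sum_r (-1)^r p^binom(r,2) w^r is a constant
   multiple of j(w) (itself a Liouville argument), and for the right-hand side because
   j(p y) = -j(y)/y.  The simple poles of F along the orbits p^k/z0 and p^k/z1 cancel, so F
   extends to a holomorphic function on C - {0} which is constant by Liouville; the constant c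
   satisfies c = -x c, hence vanishes.

   Taking the base q^3, the 3-dissection j(z;q) = (q;q)/(q^3;q^3)^3 j(z;q^3) j(qz;q^3) j(q/z;q^3)
   and the quasi-periodicity of j turn the identity into a combination of three differences of
   m along z, each given by the change-of-z formula.  What remains is a three-term relation
   between theta functions in base q^3, which is the cocycle relation of the change-of-z
   formula for m(q,q^3,-) at the points z/q, qz and z. *)

theory Submission
  imports Defs "HOL-Complex_Analysis.Complex_Analysis"
begin

section \<open>Powers, triangular numbers and bilateral sums\<close>

definition tri :: "int \<Rightarrow> int" where
  "tri r = r * (r - 1) div 2"

lemma tri_nonneg: "0 \<le> tri r"
proof -
  have "0 \<le> r * (r - 1)"
    by (cases "r \<ge> 1") (auto simp: mult_nonneg_nonneg mult_nonpos_nonpos)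
  then show ?thesis by (simp add: tri_def)
qed

lemma power_nat_tri: "(p::'a::division_ring) ^ nat (r * (r - 1) div 2) = p powi tri r"
  using tri_nonneg[of r] by (simp add: tri_def power_int_def)

lemma tri_succ: "tri (r + 1) = tri r + r"
proof -
  have "(r + 1) * (r + 1 - 1) = r * (r - 1) + r * 2" by (simp add: algebra_simps)
  then show ?thesis unfolding tri_def by simp
qed

lemma tri_one_minus: "tri (1 - r) = tri r"
proof -
  have "(1 - r) * (1 - r - 1) = r * (r - 1)" by (simp add: algebra_simps)
  then show ?thesis unfolding tri_def by simp
qed

lemma tri_1 [simp]: "tri 1 = 0"
  by (simp add: tri_def)

lemma power_int_le_iff_less_1:
  fixes a :: real
  assumes "0 < a" "a < 1"
  shows "a powi m \<le> a powi n \<longleftrightarrow> n \<le> m"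
  using assms power_int_decreasing[of n m a] power_int_strict_decreasing[of m n a]
  by (cases "n \<le> m") auto

lemma power_int_eq_iff_less_1:
  fixes a :: real
  assumes "0 < a" "a < 1"
  shows "a powi m = a powi n \<longleftrightarrow> m = n"
  using power_int_le_iff_less_1[OF assms] by (metis order_antisym order_refl)

lemma ex_power_int_bracket:
  fixes \<rho> t :: real
  assumes "0 < \<rho>" "\<rho> < 1" "0 < t"
  obtains k :: int where "\<rho> powi (k + 1) < t" "t \<le> \<rho> powi k"
proof -
  have ln\<rho>: "ln \<rho> < 0" using assms by simp
  have ln_powi: "ln (\<rho> powi m) = of_int m * ln \<rho>" for m
    using assms by (simp add: powr_real_of_int'[symmetric] ln_powr)
  define k where "k = \<lfloor>ln t / ln \<rho>\<rfloor>"
  have "of_int k \<le> ln t / ln \<rho>" "ln t / ln \<rho> < of_int k + 1"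
    unfolding k_def by linarith+
  then have "ln t \<le> of_int k * ln \<rho>" "(of_int k + 1) * ln \<rho> < ln t"
    using ln\<rho> by (simp_all add: neg_le_divide_eq neg_divide_less_eq)
  then have "ln t \<le> ln (\<rho> powi k)" "ln (\<rho> powi (k + 1)) < ln t"
    by (simp_all only: ln_powi of_int_add of_int_1)
  then have "t \<le> \<rho> powi k" "\<rho> powi (k + 1) < t"
    using assms by simp_all
  then show ?thesis using that by blast
qed

lemma finite_power_int_between:
  fixes \<rho> a b :: real
  assumes "0 < \<rho>" "\<rho> < 1" "0 < a"
  shows "finite {k::int. a \<le> \<rho> powi k \<and> \<rho> powi k \<le> b}"
proof (cases "0 < b")
  case True
  obtain ka where ka: "\<rho> powi (ka + 1) < a" using ex_power_int_bracket[OF assms] by blast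
  obtain kb where kb: "b \<le> \<rho> powi kb" using ex_power_int_bracket[OF assms(1,2) True] by blast
  have "{k. a \<le> \<rho> powi k \<and> \<rho> powi k \<le> b} \<subseteq> {kb..ka}"
  proof safe
    fix k assume "a \<le> \<rho> powi k" "\<rho> powi k \<le> b"
    then have "\<rho> powi (ka + 1) < \<rho> powi k" "\<rho> powi k \<le> \<rho> powi kb" using ka kb by linarith+
    then have "\<not> ka + 1 \<le> k" "kb \<le> k"
      using power_int_le_iff_less_1[OF assms(1,2), of k "ka + 1"] power_int_le_iff_less_1[OF assms(1,2), of k kb]
      by linarith+
    then show "k \<in> {kb..ka}" by auto
  qed
  then show ?thesis by (rule finite_subset) simp
next
  case False
  then have "{k::int. a \<le> \<rho> powi k \<and> \<rho> powi k \<le> b} = {}" using assms by force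
  then show ?thesis by (simp only: finite.emptyI)
qed

lemma summable_on_int_from_halves:
  fixes f :: "int \<Rightarrow> 'a::banach"
  assumes "summable (\<lambda>n. norm (f (int n)))" "summable (\<lambda>n. norm (f (- int n - 1)))"
  shows "f summable_on UNIV"
proof -
  have "f summable_on range int" "f summable_on range (\<lambda>n. - int n - 1)"
    using assms by (auto simp: summable_on_reindex inj_on_def o_def intro!: norm_summable_imp_summable_on)
  then have "f summable_on (range int \<union> range (\<lambda>n. - int n - 1))"
    by (rule summable_on_Un_disjoint) auto
  moreover have "range int \<union> range (\<lambda>n. - int n - 1) = UNIV"
  proof -
    have "x \<in> range int \<union> range (\<lambda>n. - int n - 1)" for x
      by (cases x rule: int_cases) auto
    then show ?thesis by blast
  qed
  ultimately show ?thesis by simp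
qed

lemma summable_tri_weight:
  fixes \<rho> a :: real
  assumes "0 < \<rho>" "\<rho> < 1" "0 < a"
  shows "summable (\<lambda>n. \<rho> powi tri (int n) * a ^ n)"
proof -
  define g where "g n = \<rho> powi tri (int n) * a ^ n" for n
  have g_Suc: "g (Suc n) = g n * (\<rho> ^ n * a)" for n
    using assms tri_succ[of "int n"] by (simp add: g_def power_int_add add.commute)
  have "(\<lambda>n. \<rho> ^ n * a) \<longlonglongrightarrow> 0 * a"
    using assms by (intro tendsto_mult LIMSEQ_power_zero) auto
  then have "eventually (\<lambda>n. \<rho> ^ n * a < 1/2) sequentially"
    by (rule order_tendstoD) simp
  then obtain N where N: "\<And>n. n \<ge> N \<Longrightarrow> \<rho> ^ n * a < 1/2"
    by (auto simp: eventually_sequentially)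
  have "summable g"
  proof (rule summable_ratio_test[of "1/2" N])
    fix n assume "n \<ge> N"
    have "0 \<le> g n" "0 \<le> \<rho> ^ n * a" using assms by (simp_all add: g_def)
    then have "norm (g (Suc n)) = g n * (\<rho> ^ n * a)" by (simp add: g_Suc)
    also have "\<dots> \<le> g n * (1/2)"
      using N[OF \<open>n \<ge> N\<close>] \<open>0 \<le> g n\<close> by (intro mult_left_mono) auto
    finally show "norm (g (Suc n)) \<le> 1/2 * norm (g n)" using \<open>0 \<le> g n\<close> by simp
  qed simp
  then show ?thesis by (simp add: g_def[abs_def])
qed

lemma tri_weight_summable_on:
  fixes \<rho> a :: real
  assumes "0 < \<rho>" "\<rho> < 1" "0 < a"
  shows "(\<lambda>r::int. \<rho> powi tri r * a powi r) summable_on UNIV"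
proof (rule summable_on_int_from_halves)
  show "summable (\<lambda>n. norm (\<rho> powi tri (int n) * a powi int n))"
    using summable_tri_weight[OF assms] assms by (simp add: abs_mult)
next
  have "tri (- int n - 1) = tri (int (n + 2))" for n
  proof -
    have "- int n - 1 = 1 - int (n + 2)" by simp
    then show ?thesis by (simp only: tri_one_minus)
  qed
  moreover have "a powi (- int n - 1) = a * (1/a) ^ (n + 2)" for n
    using assms by (simp add: power_int_diff power_int_minus power_one_over field_simps)
  ultimately have "norm (\<rho> powi tri (- int n - 1) * a powi (- int n - 1))
      = a * (\<rho> powi tri (int (n + 2)) * (1/a) ^ (n + 2))" for n
    using assms by (simp add: abs_mult)
  moreover have "summable (\<lambda>n. a * (\<rho> powi tri (int (n + 2)) * (1/a) ^ (n + 2)))"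
    using summable_tri_weight[of \<rho> "1/a"] assms
      summable_iff_shift[where f="\<lambda>n. \<rho> powi tri (int n) * (1/a) ^ n" and k=2]
    by (intro summable_mult) simp
  ultimately show "summable (\<lambda>n. norm (\<rho> powi tri (- int n - 1) * a powi (- int n - 1)))"
    by simp
qed

definition geom_orbit :: "complex \<Rightarrow> complex \<Rightarrow> complex set" where
  "geom_orbit p c = range (\<lambda>k::int. c * p powi k)"

lemma mem_geom_orbit_inverse_iff:
  assumes "z \<noteq> 0"
  shows "y \<in> geom_orbit p (1 / z) \<longleftrightarrow> y * z \<in> geom_orbit p 1"
proof -
  have "y = 1 / z * p powi k \<longleftrightarrow> y * z = 1 * p powi k" for k
    using assms by (auto simp: field_simps)
  then show ?thesis unfolding geom_orbit_def by (simp add: image_iff)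
qed

lemma norm_between_in_cball:
  assumes "y \<in> cball x (norm x / 2)"
  shows "norm x / 2 \<le> norm y" "norm y \<le> 3 * norm x / 2"
proof -
  have "norm x \<le> norm y + dist x y" "norm y \<le> norm x + dist x y"
    by (metis dist_norm norm_triangle_sub add.commute norm_minus_commute)+
  then show "norm x / 2 \<le> norm y" "norm y \<le> 3 * norm x / 2" using assms by auto
qed

lemma not_islimpt_geom_orbit:
  assumes p: "0 < norm p" "norm p < 1" and x: "x \<noteq> 0"
  shows "\<not> x islimpt geom_orbit p c"
proof (cases "c = 0")
  case True
  then have "geom_orbit p c = {0}" by (auto simp: geom_orbit_def)
  then show ?thesis by (simp add: islimpt_finite)
next
  case False
  define a b where "a = norm x / (2 * norm c)" and "b = 3 * norm x / (2 * norm c)"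
  have "geom_orbit p c \<inter> ball x (norm x / 2)
      \<subseteq> (\<lambda>k. c * p powi k) ` {k. a \<le> norm p powi k \<and> norm p powi k \<le> b}"
  proof
    fix y assume y: "y \<in> geom_orbit p c \<inter> ball x (norm x / 2)"
    then obtain k where k: "y = c * p powi k" by (auto simp: geom_orbit_def)
    from y have "y \<in> cball x (norm x / 2)" by auto
    then have "norm x / 2 \<le> norm c * norm p powi k" "norm c * norm p powi k \<le> 3 * norm x / 2"
      using norm_between_in_cball[of y x] unfolding k by (simp_all add: norm_mult norm_power_int)
    then have "a \<le> norm p powi k" "norm p powi k \<le> b"
      using False by (simp_all add: a_def b_def pos_divide_le_eq pos_le_divide_eq mult_ac)
    then show "y \<in> (\<lambda>k. c * p powi k) ` {k. a \<le> norm p powi k \<and> norm p powi k \<le> b}"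
      unfolding k by blast
  qed
  moreover have "finite {k. a \<le> norm p powi k \<and> norm p powi k \<le> b}"
    using p x False by (intro finite_power_int_between) (simp_all add: a_def)
  ultimately have "finite (geom_orbit p c \<inter> ball x (norm x / 2))"
    by (meson finite_subset finite_imageI)
  moreover have "norm x / 2 > 0" using x by simp
  ultimately show ?thesis unfolding islimpt_eq_infinite_ball by blast
qed

section \<open>The q-Pochhammer symbol and the theta function j\<close>

lemma qpoch_convergent_prod:
  assumes "norm (p::complex) < 1"
  shows "convergent_prod (\<lambda>n. 1 - a * p ^ n)"
proof (intro abs_convergent_prod_imp_convergent_prod summable_imp_abs_convergent_prod)
  have "summable (\<lambda>n. norm a * norm p ^ n)"
    using assms by (intro summable_mult summable_geometric) auto
  then show "summable (\<lambda>n. norm (1 - a * p ^ n - 1))" by (simp add: norm_mult norm_power)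
qed

lemma qpoch_LIMSEQ:
  assumes "norm (p::complex) < 1"
  shows "(\<lambda>N. \<Prod>n<N. (1 - a * p ^ n)) \<longlonglongrightarrow> qpoch a p"
  unfolding qpoch_def using convergent_prod_LIMSEQ[OF qpoch_convergent_prod[OF assms]]
  by (simp add: LIMSEQ_lessThan_iff_atMost)

lemma qpoch_shift:
  assumes "norm (p::complex) < 1"
  shows "qpoch a p = (1 - a) * qpoch (a * p) p"
proof -
  have "(\<lambda>N. \<Prod>n<Suc N. (1 - a * p ^ n)) \<longlonglongrightarrow> qpoch a p"
    using qpoch_LIMSEQ[OF assms] by (rule LIMSEQ_Suc)
  moreover have "(\<Prod>n<Suc N. (1 - a * p ^ n)) = (1 - a) * (\<Prod>n<N. (1 - (a * p) * p ^ n))" for N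
    by (subst prod.lessThan_Suc_shift) (simp add: mult.assoc)
  moreover have "(\<lambda>N. (1 - a) * (\<Prod>n<N. (1 - (a * p) * p ^ n))) \<longlonglongrightarrow> (1 - a) * qpoch (a * p) p"
    by (intro tendsto_mult tendsto_const qpoch_LIMSEQ assms)
  ultimately show ?thesis using LIMSEQ_unique by fastforce
qed

lemma qpoch_nonzero:
  assumes "norm (p::complex) < 1" "\<And>n. a * p ^ n \<noteq> 1"
  shows "qpoch a p \<noteq> 0"
  unfolding qpoch_def using assms by (intro prodinf_nonzero qpoch_convergent_prod) auto

lemma qpoch_self_nonzero:
  assumes "norm (p::complex) < 1"
  shows "qpoch p p \<noteq> 0"
proof (rule qpoch_nonzero[OF assms])
  fix n
  have "norm (p * p ^ n) < 1"
    using assms by (simp add: norm_mult norm_power power_less_one_iff flip: power_Suc)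
  then show "p * p ^ n \<noteq> 1" by auto
qed

lemma qpoch_1 [simp]: "norm (p::complex) < 1 \<Longrightarrow> qpoch 1 p = 0"
  using qpoch_shift[of p 1] by simp

lemma qpoch_dissect3:
  assumes "norm (p::complex) < 1"
  shows "qpoch a p = qpoch a (p^3) * qpoch (a * p) (p^3) * qpoch (a * p^2) (p^3)"
proof -
  have "norm (p^3) < 1" using assms by (simp add: norm_power power_less_one_iff)
  have split: "(\<Prod>n<3*N. (1 - a * p ^ n))
      = (\<Prod>k<N. (1 - a * (p^3) ^ k)) * (\<Prod>k<N. (1 - (a * p) * (p^3) ^ k))
        * (\<Prod>k<N. (1 - (a * p^2) * (p^3) ^ k))" for N
  proof (induction N)
    case (Suc N)
    have N3: "3 * Suc N = Suc (Suc (Suc (3 * N)))" by simp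
    have powers: "p ^ (3 * N) = (p^3) ^ N" "p ^ Suc (3 * N) = p * (p^3) ^ N"
      "p ^ Suc (Suc (3 * N)) = p^2 * (p^3) ^ N"
      by (simp_all add: power_mult power2_eq_square)
    show ?case unfolding N3 prod.lessThan_Suc Suc.IH powers by (simp only: ac_simps)
  qed simp
  have "(\<lambda>N. \<Prod>n<3*N. (1 - a * p ^ n)) \<longlonglongrightarrow> qpoch a p"
    using LIMSEQ_subseq_LIMSEQ[OF qpoch_LIMSEQ[OF assms], of "\<lambda>N. 3 * N"]
    by (simp add: strict_mono_def o_def)
  moreover have "(\<lambda>N. \<Prod>n<3*N. (1 - a * p ^ n))
      \<longlonglongrightarrow> qpoch a (p^3) * qpoch (a * p) (p^3) * qpoch (a * p^2) (p^3)"
    unfolding split by (intro tendsto_mult qpoch_LIMSEQ \<open>norm (p^3) < 1\<close>)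
  ultimately show ?thesis using LIMSEQ_unique by blast
qed

lemma holomorphic_on_qpoch:
  assumes "norm (p::complex) < 1"
  shows "(\<lambda>a. qpoch a p) holomorphic_on UNIV"
proof (rule holomorphic_uniform_sequence[where f = "\<lambda>N a. \<Prod>n<N. (1 - a * p ^ n)"])
  fix x :: complex
  have "uniformly_convergent_on (cball x 1) (\<lambda>N a. \<Prod>n<N. (1 - a * p ^ n))"
  proof (rule uniformly_convergent_on_prod')
    show "uniformly_convergent_on (cball x 1) (\<lambda>N a. \<Sum>n<N. norm (1 - a * p ^ n - 1))"
    proof (rule Weierstrass_m_test'[where M = "\<lambda>n. (norm x + 1) * norm p ^ n"])
      fix n a assume "a \<in> cball x 1"
      then have "norm a \<le> norm x + 1"
        using norm_triangle_sub[of a x] by (simp add: dist_norm norm_minus_commute)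
      then show "norm (norm (1 - a * p ^ n - 1)) \<le> (norm x + 1) * norm p ^ n"
        by (simp add: norm_mult norm_power mult_right_mono)
    next
      show "summable (\<lambda>n. (norm x + 1) * norm p ^ n)"
        using assms by (intro summable_mult summable_geometric) auto
    qed
  qed (auto intro!: continuous_intros)
  then have "uniform_limit (cball x 1) (\<lambda>N a. \<Prod>n<N. (1 - a * p ^ n)) (\<lambda>a. qpoch a p) sequentially"
    unfolding uniformly_convergent_uniform_limit_iff
    by (rule uniform_limit_cong'[THEN iffD1, rotated -1]) (auto intro!: limI qpoch_LIMSEQ assms)
  then show "\<exists>d>0. cball x d \<subseteq> UNIV
      \<and> uniform_limit (cball x d) (\<lambda>N a. \<Prod>n<N. (1 - a * p ^ n)) (\<lambda>a. qpoch a p) sequentially"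
    by (intro exI[of _ 1]) auto
qed (auto intro!: holomorphic_intros)

lemma field_differentiable_qpoch [derivative_intros]:
  assumes "norm p < 1" "f field_differentiable at x"
  shows "(\<lambda>y. qpoch (f y) p) field_differentiable at x"
proof -
  have "(\<lambda>a. qpoch a p) field_differentiable at (f x)"
    using holomorphic_on_qpoch[OF assms(1)] by (simp add: holomorphic_on_imp_differentiable_at)
  then show ?thesis using field_differentiable_compose[OF assms(2)] by (simp add: o_def)
qed

definition jtheta_cofactor :: "complex \<Rightarrow> complex \<Rightarrow> complex" where
  "jtheta_cofactor y p = qpoch (y * p) p * qpoch (p / y) p * qpoch p p"

lemma jtheta_eq_cofactor: "norm p < 1 \<Longrightarrow> jtheta y p = (1 - y) * jtheta_cofactor y p"
  unfolding jtheta_def jtheta_cofactor_def using qpoch_shift[of p y] by simp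

lemma jtheta_cofactor_1: "jtheta_cofactor 1 p = qpoch p p ^ 3"
  by (simp add: jtheta_cofactor_def power3_eq_cube)

lemma field_differentiable_jtheta [derivative_intros]:
  assumes "norm p < 1" "f field_differentiable at x" "f x \<noteq> 0"
  shows "(\<lambda>y. jtheta (f y) p) field_differentiable at x"
  unfolding jtheta_def using assms by (intro derivative_intros) auto

lemma field_differentiable_jtheta_cofactor [derivative_intros]:
  assumes "norm p < 1" "f field_differentiable at x" "f x \<noteq> 0"
  shows "(\<lambda>y. jtheta_cofactor (f y) p) field_differentiable at x"
  unfolding jtheta_cofactor_def using assms by (intro derivative_intros) auto

lemma jtheta_mult:
  assumes "norm p < 1" "p \<noteq> 0" "y \<noteq> 0"
  shows "jtheta (p * y) p = - jtheta y p / y"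
proof -
  have "jtheta (p * y) p = qpoch (y * p) p * qpoch (1 / y) p * qpoch p p"
    unfolding jtheta_def using assms by (simp add: mult.commute)
  also have "qpoch (1 / y) p = (1 - 1 / y) * qpoch (p / y) p"
    using qpoch_shift[OF assms(1), of "1 / y"] by simp
  finally show ?thesis
    unfolding jtheta_eq_cofactor[OF assms(1)] jtheta_cofactor_def using assms(3) by (simp add: field_simps)
qed

lemma jtheta_reflect: "p \<noteq> 0 \<Longrightarrow> y \<noteq> 0 \<Longrightarrow> jtheta (p / y) p = jtheta y p"
  unfolding jtheta_def by simp

lemma jtheta_inverse:
  assumes "norm p < 1" "p \<noteq> 0" "y \<noteq> 0"
  shows "jtheta (1 / y) p = - jtheta y p / y"
  using jtheta_mult[OF assms(1,2), of "1 / y"] jtheta_reflect[OF assms(2,3)] assms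
  by (simp add: field_simps)

lemma jtheta_eq_0_iff:
  assumes p: "0 < norm p" "norm p < 1" and y: "y \<noteq> 0"
  shows "jtheta y p = 0 \<longleftrightarrow> y \<in> geom_orbit p 1"
proof
  have p0: "p \<noteq> 0" using p by auto
  assume "jtheta y p = 0"
  then have "qpoch y p = 0 \<or> qpoch (p / y) p = 0"
    using qpoch_self_nonzero[OF p(2)] by (simp add: jtheta_def)
  then consider n where "y * p ^ n = 1" | n where "p / y * p ^ n = 1"
    using qpoch_nonzero[OF p(2)] by blast
  then show "y \<in> geom_orbit p 1"
  proof cases
    case 1
    then have "y = 1 * p powi (- int n)" using p0 by (simp add: power_int_minus field_simps)
    then show ?thesis unfolding geom_orbit_def by blast
  next
    case 2
    then have "y = p ^ Suc n" using y by (simp add: field_simps)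
    then have "y = 1 * p powi int (Suc n)" by (simp only: power_int_of_nat mult_1)
    then show ?thesis unfolding geom_orbit_def by blast
  qed
next
  have p0: "p \<noteq> 0" using p by auto
  have "jtheta (p powi k) p = 0" for k
  proof (induction k rule: int_induct[where k = 0])
    case base
    then show ?case using p by (simp add: jtheta_def)
  next
    case (step1 i)
    then show ?case using jtheta_mult[OF p(2) p0, of "p powi i"] p0 by (simp add: power_int_add mult.commute)
  next
    case (step2 i)
    then show ?case using jtheta_mult[OF p(2) p0, of "p powi (i - 1)"] p0
      by (simp add: power_int_diff)
  qed
  then show "y \<in> geom_orbit p 1 \<Longrightarrow> jtheta y p = 0" by (auto simp: geom_orbit_def)
qed

lemma jtheta_cube_reflect:
  assumes "q \<noteq> 0" "y \<noteq> 0"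
  shows "jtheta (q^2 * y) (q^3) = jtheta (q / y) (q^3)"
proof -
  have "q^3 / (q / y) = q^2 * y"
    using assms by (simp add: field_simps power2_eq_square power3_eq_cube)
  then show ?thesis using jtheta_reflect[of "q^3" "q / y"] assms by simp
qed

lemma jtheta_dissect3:
  assumes "norm q < 1" "q \<noteq> 0" "z \<noteq> 0"
  shows "jtheta z q = qpoch q q / qpoch (q^3) (q^3) ^ 3
      * (jtheta z (q^3) * jtheta (q * z) (q^3) * jtheta (q / z) (q^3))"
proof -
  have "norm (q^3) < 1" using assms by (simp add: norm_power power_less_one_iff)
  then have "qpoch (q^3) (q^3) \<noteq> 0" by (rule qpoch_self_nonzero)
  moreover have quotients: "q^3 / z = q / z * q^2" "q^3 / (q * z) = q / z * q" "q^3 / (q^2 * z) = q / z"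
    using assms by (simp_all add: field_simps power2_eq_square power3_eq_cube)
  ultimately have "jtheta z q = qpoch q q / qpoch (q^3) (q^3) ^ 3
      * (jtheta z (q^3) * jtheta (q * z) (q^3) * jtheta (q^2 * z) (q^3))"
    unfolding jtheta_def qpoch_dissect3[OF assms(1), of z] qpoch_dissect3[OF assms(1), of "q / z"] quotients
    by (simp add: field_simps power3_eq_cube)
  then show ?thesis unfolding jtheta_cube_reflect[OF assms(2,3)] .
qed

section \<open>The theta series and the Appell-Lerch sum\<close>

lemma holomorphic_on_ball_infsum:
  fixes f :: "'a \<Rightarrow> complex \<Rightarrow> complex"
  assumes bound: "\<And>x y. x \<in> X \<Longrightarrow> y \<in> cball z0 e \<Longrightarrow> norm (f x y) \<le> M x"
    and summable: "M summable_on X"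
    and holo: "\<And>x. x \<in> X \<Longrightarrow> f x holomorphic_on cball z0 e"
  shows "(\<lambda>y. \<Sum>\<^sub>\<infinity>x\<in>X. f x y) holomorphic_on ball z0 e"
proof -
  have "eventually (\<lambda>X'. continuous_on (cball z0 e) (\<lambda>y. \<Sum>x\<in>X'. f x y)
      \<and> (\<lambda>y. \<Sum>x\<in>X'. f x y) holomorphic_on ball z0 e) (finite_subsets_at_top X)"
  proof (rule eventually_finite_subsets_at_top_weakI)
    fix X' assume "finite X'" "X' \<subseteq> X"
    then have "(\<lambda>y. \<Sum>x\<in>X'. f x y) holomorphic_on cball z0 e"
      using holo by (intro holomorphic_on_sum) auto
    then show "continuous_on (cball z0 e) (\<lambda>y. \<Sum>x\<in>X'. f x y)
        \<and> (\<lambda>y. \<Sum>x\<in>X'. f x y) holomorphic_on ball z0 e"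
      by (meson ball_subset_cball holomorphic_on_imp_continuous_on holomorphic_on_subset)
  qed
  from holomorphic_uniform_limit[OF this Weierstrass_m_test_general[OF bound summable]]
  show ?thesis by simp
qed

definition theta_term :: "complex \<Rightarrow> complex \<Rightarrow> int \<Rightarrow> complex" where
  "theta_term w p r = (-1) powi r * p powi tri r * w powi r"

definition theta_series :: "complex \<Rightarrow> complex \<Rightarrow> complex" where
  "theta_series w p = (\<Sum>\<^sub>\<infinity>r\<in>UNIV. theta_term w p r)"

lemma norm_theta_term: "norm (theta_term w p r) = norm p powi tri r * norm w powi r"
  by (simp add: theta_term_def norm_mult norm_power_int)

lemma theta_term_abs_summable:
  assumes "0 < norm p" "norm p < 1" "w \<noteq> 0"
  shows "(\<lambda>r. norm (theta_term w p r)) summable_on A"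
  unfolding norm_theta_term using assms
  by (intro summable_on_subset_banach[OF tri_weight_summable_on]) auto

lemma theta_term_summable:
  assumes "0 < norm p" "norm p < 1" "w \<noteq> 0"
  shows "theta_term w p summable_on A"
  using theta_term_abs_summable[OF assms] by (rule abs_summable_summable)

lemma analytic_on_theta_series:
  assumes p: "0 < norm p" "norm p < 1"
  shows "(\<lambda>w. theta_series w p) analytic_on -{0}"
  unfolding analytic_on_def
proof
  fix w0 :: complex assume "w0 \<in> -{0}"
  then have w0: "w0 \<noteq> 0" by simp
  define e where "e = norm w0 / 2"
  define M where "M r = norm p powi tri r * ((3 * e) powi r + e powi r)" for r
  have "(\<lambda>w. \<Sum>\<^sub>\<infinity>r\<in>UNIV. theta_term w p r) holomorphic_on ball w0 e"
  proof (rule holomorphic_on_ball_infsum[where M = M])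
    fix r w assume "w \<in> cball w0 e"
    then have w: "e \<le> norm w" "norm w \<le> 3 * e"
      using norm_between_in_cball[of w w0] by (auto simp: e_def)
    have "norm w powi r \<le> (3 * e) powi r + e powi r"
    proof (cases "r \<ge> 0")
      case True
      then have "norm w powi r \<le> (3 * e) powi r" using w by (intro power_int_mono) auto
      then show ?thesis using w0 by (simp add: e_def add_increasing2)
    next
      case False
      then have "norm w powi r \<le> e powi r" using w w0 by (intro power_int_antimono) (auto simp: e_def)
      then show ?thesis using w0 by (simp add: e_def add_increasing)
    qed
    then show "norm (theta_term w p r) \<le> M r"
      unfolding norm_theta_term M_def by (intro mult_left_mono) auto
  next
    have "(\<lambda>r. norm p powi tri r * (3 * e) powi r + norm p powi tri r * e powi r) summable_on UNIV"
      using p w0 by (intro summable_on_add tri_weight_summable_on) (auto simp: e_def)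
    then show "M summable_on UNIV" unfolding M_def by (simp add: distrib_left)
  next
    fix r :: int
    have "0 \<notin> cball w0 e" using w0 by (simp add: e_def)
    then show "(\<lambda>w. theta_term w p r) holomorphic_on cball w0 e"
      unfolding theta_term_def by (intro holomorphic_intros) auto
  qed
  then show "\<exists>e>0. (\<lambda>w. theta_series w p) holomorphic_on ball w0 e"
    using w0 unfolding theta_series_def e_def by (intro exI[of _ "norm w0 / 2"]) auto
qed

lemma field_differentiable_theta_series [derivative_intros]:
  assumes "0 < norm p" "norm p < 1" "f field_differentiable at x" "f x \<noteq> 0"
  shows "(\<lambda>y. theta_series (f y) p) field_differentiable at x"
proof -
  have "(\<lambda>w. theta_series w p) field_differentiable at (f x)"
    using analytic_on_theta_series[OF assms(1,2)] assms(4) by (simp add: analytic_on_imp_differentiable_at)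
  then show ?thesis using field_differentiable_compose[OF assms(3)] by (simp add: o_def)
qed

lemma theta_series_mult:
  assumes p: "0 < norm p" "norm p < 1" and w: "w \<noteq> 0"
  shows "theta_series (p * w) p = - theta_series w p / w"
proof -
  have p0: "p \<noteq> 0" using p by auto
  have shift: "theta_term (p * w) p (s - 1) = - theta_term w p s / w" for s
  proof -
    have "p powi tri (s - 1) * p powi (s - 1) = p powi tri s"
      using p0 tri_succ[of "s - 1"] by (simp add: power_int_add[symmetric])
    then show ?thesis
      using w unfolding theta_term_def power_int_mult_distrib
      by (simp add: power_int_diff field_simps)
  qed
  have "theta_series (p * w) p = (\<Sum>\<^sub>\<infinity>s\<in>UNIV. theta_term (p * w) p (s - 1))"
    unfolding theta_series_def
    by (rule infsum_reindex_bij_betw[symmetric]) (rule bij_betwI[where g = "\<lambda>s. s + 1"], auto)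
  also have "\<dots> = (\<Sum>\<^sub>\<infinity>s\<in>UNIV. (- 1 / w) * theta_term w p s)"
    unfolding shift by simp
  also have "\<dots> = - theta_series w p / w"
    unfolding theta_series_def using theta_term_summable[OF p w] by (subst infsum_cmult_right) auto
  finally show ?thesis .
qed

lemma theta_series_1:
  assumes "0 < norm p" "norm p < 1"
  shows "theta_series 1 p = 0"
proof -
  have reflect: "theta_term 1 p (1 - r) = - theta_term 1 p r" for r
  proof -
    have "(-1::complex) powi r * (-1) powi r = 1"
      by (simp add: power_int_mult_distrib[symmetric])
    then have "(-1::complex) powi (1 - r) = - ((-1) powi r)"
      by (simp add: power_int_diff field_simps)
    then show ?thesis unfolding theta_term_def tri_one_minus by simp
  qed
  have "theta_series 1 p = (\<Sum>\<^sub>\<infinity>r\<in>UNIV. theta_term 1 p (1 - r))"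
    unfolding theta_series_def
    by (rule infsum_reindex_bij_betw[symmetric]) (rule bij_betwI[where g = "\<lambda>s. 1 - s"], auto)
  also have "\<dots> = - theta_series 1 p"
    unfolding reflect theta_series_def by (rule infsum_uminus)
  finally show ?thesis by simp
qed

definition lerch_term :: "complex \<Rightarrow> complex \<Rightarrow> complex \<Rightarrow> int \<Rightarrow> complex" where
  "lerch_term x p w r = theta_term w p r / (1 - p powi (r - 1) * x * w)"

definition lerch_sum :: "complex \<Rightarrow> complex \<Rightarrow> complex \<Rightarrow> complex" where
  "lerch_sum x p w = (\<Sum>\<^sub>\<infinity>r\<in>UNIV. lerch_term x p w r)"

lemma appell_m_eq_lerch_sum: "appell_m x p w = lerch_sum x p w / jtheta w p"
  unfolding appell_m_def lerch_sum_def lerch_term_def theta_term_def power_nat_tri by simp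

lemma lerch_denominators_nonzero_iff:
  assumes "p \<noteq> 0"
  shows "(\<forall>r. 1 - p powi (r - 1) * x * w \<noteq> 0) \<longleftrightarrow> x * w \<notin> geom_orbit p 1"
proof -
  have "1 - p powi (r - 1) * x * w = 0 \<longleftrightarrow> x * w = p powi (1 - r)" for r
  proof -
    define a where "a = p powi (r - 1)"
    have inv: "p powi (1 - r) = inverse a" unfolding a_def by (simp flip: power_int_minus)
    have "a \<noteq> 0" using assms by (simp add: a_def)
    then show ?thesis unfolding a_def[symmetric] inv by (auto simp: field_simps)
  qed
  moreover have "(\<exists>r. x * w = p powi (1 - r)) \<longleftrightarrow> (\<exists>k. x * w = p powi k)"
  proof
    assume "\<exists>k. x * w = p powi k"
    then obtain k where "x * w = p powi k" by blast
    then have "x * w = p powi (1 - (1 - k))" by simp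
    then show "\<exists>r. x * w = p powi (1 - r)" by blast
  qed blast
  ultimately show ?thesis by (auto simp: geom_orbit_def)
qed

lemma finite_lerch_small_denominators:
  fixes p w :: complex
  assumes p: "0 < norm p" "norm p < 1" and w: "w \<noteq> 0" and \<delta>: "0 < \<delta>"
  shows "finite {r. \<exists>x. \<delta> \<le> norm x \<and> norm x \<le> B \<and> norm (1 - p powi (r - 1) * x * w) < 1/2}"
proof -
  define a b where "a = 1 / (2 * max B \<delta> * norm w)" and "b = 3 / (2 * \<delta> * norm w)"
  have "{r. \<exists>x. \<delta> \<le> norm x \<and> norm x \<le> B \<and> norm (1 - p powi (r - 1) * x * w) < 1/2}
      \<subseteq> (\<lambda>k. k + 1) ` {k. a \<le> norm p powi k \<and> norm p powi k \<le> b}"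
  proof safe
    fix r x assume x: "\<delta> \<le> norm x" "norm x \<le> B" and small: "norm (1 - p powi (r - 1) * x * w) < 1/2"
    define t where "t = norm p powi (r - 1)"
    define u where "u = p powi (r - 1) * x * w"
    have "norm (1::complex) \<le> norm u + norm (1 - u)" "norm u \<le> norm (1::complex) + norm (u - 1)"
      by (rule norm_triangle_sub)+
    then have "1/2 < t * norm x * norm w" "t * norm x * norm w < 3/2"
      using small by (auto simp: t_def u_def norm_mult norm_power_int norm_minus_commute)
    moreover have "t * norm x * norm w \<le> t * max B \<delta> * norm w" "t * \<delta> * norm w \<le> t * norm x * norm w"
      using x by (auto simp: t_def intro!: mult_right_mono mult_left_mono)
    ultimately have "1/2 < t * max B \<delta> * norm w" "t * \<delta> * norm w < 3/2" by linarith+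
    then have "a \<le> t" "t \<le> b"
      using w \<delta> by (simp_all add: a_def b_def field_simps)
    then show "r \<in> (\<lambda>k. k + 1) ` {k. a \<le> norm p powi k \<and> norm p powi k \<le> b}"
      by (intro rev_image_eqI[of "r - 1"]) (auto simp: t_def)
  qed
  moreover have "finite {k. a \<le> norm p powi k \<and> norm p powi k \<le> b}"
    using p w \<delta> by (intro finite_power_int_between) (auto simp: a_def)
  ultimately show ?thesis by (meson finite_subset finite_imageI)
qed

lemma norm_lerch_term_le:
  assumes "1/2 \<le> norm (1 - p powi (r - 1) * x * w)"
  shows "norm (lerch_term x p w r) \<le> 2 * norm (theta_term w p r)"
proof -
  have "norm (lerch_term x p w r) = norm (theta_term w p r) / norm (1 - p powi (r - 1) * x * w)"
    by (simp add: lerch_term_def norm_divide)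
  also have "\<dots> \<le> norm (theta_term w p r) / (1/2)"
    using assms by (intro divide_left_mono) auto
  finally show ?thesis by simp
qed

lemma lerch_term_summable:
  assumes p: "0 < norm p" "norm p < 1" and w: "w \<noteq> 0" and x: "x \<noteq> 0"
  shows "lerch_term x p w summable_on A"
proof -
  define F where "F = {r. \<exists>y. norm x \<le> norm y \<and> norm y \<le> norm x \<and> norm (1 - p powi (r - 1) * y * w) < 1/2}"
  have "finite F" unfolding F_def using p w x by (intro finite_lerch_small_denominators) auto
  have "(\<lambda>r. norm (lerch_term x p w r)) summable_on (UNIV - F)"
  proof (rule summable_on_comparison_test)
    show "(\<lambda>r. 2 * norm (theta_term w p r)) summable_on (UNIV - F)"
      using theta_term_abs_summable[OF p w] by (rule summable_on_cmult_right)
    show "norm (lerch_term x p w r) \<le> 2 * norm (theta_term w p r)" if "r \<in> UNIV - F" for r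
      using that norm_lerch_term_le[of p r x w] by (force simp: F_def)
  qed simp
  moreover have "(\<lambda>r. norm (lerch_term x p w r)) summable_on F" using \<open>finite F\<close> by simp
  ultimately have "(\<lambda>r. norm (lerch_term x p w r)) summable_on (UNIV - F) \<union> F"
    by (rule summable_on_Un_disjoint) auto
  then have "lerch_term x p w summable_on UNIV"
    by (simp add: abs_summable_summable)
  then show ?thesis by (rule summable_on_subset_banach) simp
qed

lemma holomorphic_on_lerch_sum_tail:
  assumes p: "0 < norm p" "norm p < 1" and w: "w \<noteq> 0"
    and large: "\<And>r x. r \<in> R \<Longrightarrow> x \<in> cball x0 e \<Longrightarrow> 1/2 \<le> norm (1 - p powi (r - 1) * x * w)"
  shows "(\<lambda>x. \<Sum>\<^sub>\<infinity>r\<in>R. lerch_term x p w r) holomorphic_on ball x0 e"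
proof (rule holomorphic_on_ball_infsum[where M = "\<lambda>r. 2 * norm (theta_term w p r)"])
  show "norm (lerch_term x p w r) \<le> 2 * norm (theta_term w p r)" if "r \<in> R" "x \<in> cball x0 e" for r x
    using large[OF that] by (rule norm_lerch_term_le)
  show "(\<lambda>r. 2 * norm (theta_term w p r)) summable_on R"
    using theta_term_abs_summable[OF p w] by (rule summable_on_cmult_right)
  show "(\<lambda>x. lerch_term x p w r) holomorphic_on cball x0 e" if "r \<in> R" for r
  proof -
    have "1 - p powi (r - 1) * x * w \<noteq> 0" if "x \<in> cball x0 e" for x
      using large[OF \<open>r \<in> R\<close> that] by force
    then show ?thesis unfolding lerch_term_def by (intro holomorphic_intros) auto
  qed
qed

lemma infsum_lerch_term_split:
  assumes p: "0 < norm p" "norm p < 1" and w: "w \<noteq> 0" and x: "x \<noteq> 0" and F: "finite F"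
  shows "(\<Sum>\<^sub>\<infinity>r\<in>A. lerch_term x p w r)
    = (\<Sum>r\<in>A \<inter> F. lerch_term x p w r) + (\<Sum>\<^sub>\<infinity>r\<in>A - F. lerch_term x p w r)"
proof -
  have "(\<Sum>\<^sub>\<infinity>r\<in>(A \<inter> F) \<union> (A - F). lerch_term x p w r)
      = (\<Sum>\<^sub>\<infinity>r\<in>A \<inter> F. lerch_term x p w r) + (\<Sum>\<^sub>\<infinity>r\<in>A - F. lerch_term x p w r)"
    by (intro infsum_Un_disjoint lerch_term_summable[OF p w x]) auto
  moreover have "(A \<inter> F) \<union> (A - F) = A" by blast
  ultimately show ?thesis using F by simp
qed

lemma analytic_at_lerch_sum_except:
  assumes p: "0 < norm p" "norm p < 1" and w: "w \<noteq> 0" and x0: "x0 \<noteq> 0"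
    and nonzero: "\<And>r. r \<notin> E \<Longrightarrow> 1 - p powi (r - 1) * x0 * w \<noteq> 0"
  shows "(\<lambda>x. \<Sum>\<^sub>\<infinity>r\<in>UNIV - E. lerch_term x p w r) analytic_on {x0}"
proof -
  define e where "e = norm x0 / 2"
  define F where "F = {r. \<exists>x. e \<le> norm x \<and> norm x \<le> 3 * e \<and> norm (1 - p powi (r - 1) * x * w) < 1/2}"
  have "finite F" unfolding F_def using p w x0 by (intro finite_lerch_small_denominators) (auto simp: e_def)
  have "(\<lambda>x. \<Sum>\<^sub>\<infinity>r\<in>UNIV - E - F. lerch_term x p w r) holomorphic_on ball x0 e"
  proof (rule holomorphic_on_lerch_sum_tail[OF p w])
    show "1/2 \<le> norm (1 - p powi (r - 1) * x * w)" if "r \<in> UNIV - E - F" "x \<in> cball x0 e" for r x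
      using that norm_between_in_cball[of x x0] by (force simp: F_def e_def)
  qed
  then have "(\<lambda>x. \<Sum>\<^sub>\<infinity>r\<in>UNIV - E - F. lerch_term x p w r) analytic_on {x0}"
    using x0 by (intro holomorphic_on_imp_analytic_at[of _ "ball x0 e"]) (auto simp: e_def)
  moreover have "(\<lambda>x. \<Sum>r\<in>(UNIV - E) \<inter> F. lerch_term x p w r) analytic_on {x0}"
    unfolding lerch_term_def using nonzero by (intro analytic_intros) auto
  ultimately have "(\<lambda>x. (\<Sum>r\<in>(UNIV - E) \<inter> F. lerch_term x p w r)
      + (\<Sum>\<^sub>\<infinity>r\<in>UNIV - E - F. lerch_term x p w r)) analytic_on {x0}"
    by (intro analytic_on_add)
  moreover have "eventually (\<lambda>x. x \<in> -{0}) (nhds x0)"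
    using x0 by (intro eventually_nhds_in_open) auto
  then have "eventually (\<lambda>x. (\<Sum>r\<in>(UNIV - E) \<inter> F. lerch_term x p w r)
      + (\<Sum>\<^sub>\<infinity>r\<in>UNIV - E - F. lerch_term x p w r) = (\<Sum>\<^sub>\<infinity>r\<in>UNIV - E. lerch_term x p w r)) (nhds x0)"
  proof eventually_elim
    case (elim x)
    then show ?case by (intro infsum_lerch_term_split[OF p w _ \<open>finite F\<close>, symmetric]) simp
  qed
  ultimately show ?thesis by (simp add: analytic_at_cong)
qed

lemma field_differentiable_appell_m:
  assumes p: "0 < norm p" "norm p < 1" and w: "w \<noteq> 0" and x: "x \<noteq> 0"
    and generic: "x * w \<notin> geom_orbit p 1"
  shows "(\<lambda>y. appell_m y p w) field_differentiable at x"
proof -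
  have "\<forall>r. 1 - p powi (r - 1) * x * w \<noteq> 0"
    using generic p by (subst lerch_denominators_nonzero_iff) auto
  then have "(\<lambda>y. \<Sum>\<^sub>\<infinity>r\<in>UNIV - {}. lerch_term y p w r) analytic_on {x}"
    by (intro analytic_at_lerch_sum_except[OF p w x]) auto
  then have "(\<lambda>y. lerch_sum y p w) field_differentiable at x"
    by (simp add: lerch_sum_def analytic_on_imp_differentiable_at)
  then show ?thesis unfolding appell_m_eq_lerch_sum divide_inverse by (intro derivative_intros)
qed

lemma lerch_sum_pole_split:
  assumes p: "0 < norm p" "norm p < 1" and w: "w \<noteq> 0" and x: "x \<noteq> 0"
  shows "lerch_sum x p w = - w / (1 - x * w) + (\<Sum>\<^sub>\<infinity>r\<in>UNIV - {1}. lerch_term x p w r)"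
proof -
  have "lerch_sum x p w = lerch_term x p w 1 + (\<Sum>\<^sub>\<infinity>r\<in>UNIV - {1}. lerch_term x p w r)"
    unfolding lerch_sum_def using lerch_term_summable[OF p w x]
    by (subst infsum_insert[symmetric]) (auto simp: insert_absorb)
  then show ?thesis by (simp add: lerch_term_def theta_term_def mult.commute)
qed

lemma isCont_lerch_sum_regular_part:
  assumes p: "0 < norm p" "norm p < 1" and w: "w \<noteq> 0"
  shows "isCont (\<lambda>x. \<Sum>\<^sub>\<infinity>r\<in>UNIV - {1}. lerch_term x p w r) (1 / w)"
proof -
  have "1 - p powi (r - 1) * (1 / w) * w \<noteq> 0" if "r \<notin> {1}" for r
  proof -
    have "norm p powi (r - 1) \<noteq> norm p powi 0"
      using that p by (subst power_int_eq_iff_less_1) auto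
    then have "p powi (r - 1) \<noteq> 1" by (metis norm_one norm_power_int power_int_0_right)
    then show ?thesis using w by simp
  qed
  then have "(\<lambda>x. \<Sum>\<^sub>\<infinity>r\<in>UNIV - {1}. lerch_term x p w r) analytic_on {1 / w}"
    using w by (intro analytic_at_lerch_sum_except[OF p w]) auto
  then show ?thesis by (rule analytic_at_imp_isCont)
qed

lemma lerch_term_telescope:
  assumes p0: "p \<noteq> 0" and w: "w \<noteq> 0" and generic: "x * w \<notin> geom_orbit p 1"
  shows "lerch_term (p * x) p w s + x * lerch_term x p w (s + 1) = theta_term w p s"
proof -
  define a where "a = p powi s * x * w"
  have "1 - a \<noteq> 0"
    using generic p0 lerch_denominators_nonzero_iff[of p x w] unfolding a_def
    by (metis add_diff_cancel_right')
  have "p powi (s - 1) * (p * x) * w = a"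
    using p0 by (simp add: a_def power_int_diff field_simps)
  moreover have "x * theta_term w p (s + 1) = - theta_term w p s * a"
    using p0 w tri_succ[of s] by (simp add: a_def theta_term_def power_int_add field_simps)
  ultimately have "lerch_term (p * x) p w s + x * lerch_term x p w (s + 1)
      = theta_term w p s / (1 - a) - theta_term w p s * a / (1 - a)"
    unfolding lerch_term_def by (simp add: a_def)
  also have "\<dots> = theta_term w p s * (1 - a) / (1 - a)"
    by (simp add: diff_divide_distrib right_diff_distrib)
  also have "\<dots> = theta_term w p s"
    using \<open>1 - a \<noteq> 0\<close> by simp
  finally show ?thesis .
qed

lemma lerch_sum_mult:
  assumes p: "0 < norm p" "norm p < 1" and w: "w \<noteq> 0" and x: "x \<noteq> 0"
    and generic: "x * w \<notin> geom_orbit p 1"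
  shows "lerch_sum (p * x) p w = theta_series w p - x * lerch_sum x p w"
proof -
  have p0: "p \<noteq> 0" using p by auto
  have "(lerch_term x p w has_sum lerch_sum x p w) UNIV"
    unfolding lerch_sum_def using lerch_term_summable[OF p w x] by (rule has_sum_infsum)
  moreover have "bij_betw (\<lambda>s::int. s + 1) UNIV UNIV"
    by (rule bij_betwI[where g = "\<lambda>s. s - 1"]) auto
  ultimately have "((\<lambda>s. lerch_term x p w (s + 1)) has_sum lerch_sum x p w) UNIV"
    using has_sum_reindex_bij_betw[of "\<lambda>s. s + 1" UNIV UNIV "lerch_term x p w"] by blast
  then have "((\<lambda>s. lerch_term (p * x) p w s + x * lerch_term x p w (s + 1))
      has_sum lerch_sum (p * x) p w + x * lerch_sum x p w) UNIV"
    using p0 x lerch_term_summable[OF p w, of "p * x"]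
    by (intro has_sum_add has_sum_cmult_right) (auto simp: lerch_sum_def intro: has_sum_infsum)
  then have "lerch_sum (p * x) p w + x * lerch_sum x p w = theta_series w p"
    unfolding lerch_term_telescope[OF p0 w generic] theta_series_def by (simp add: infsumI)
  then show ?thesis by (simp add: algebra_simps)
qed

section \<open>A Liouville principle for quasi-periodic functions\<close>

lemma filtermap_times_at:
  fixes a c :: "'a::real_normed_field"
  assumes "c \<noteq> 0"
  shows "filtermap (times c) (at a) = at (c * a)"
  using assms by (intro filtermap_nhds_eq_imp_filtermap_at_eq filtermap_nhds_times) auto

lemma tendsto_at_mult_iff:
  fixes a c :: "'a::real_normed_field"
  assumes "c \<noteq> 0"
  shows "(f \<longlongrightarrow> l) (at (c * a)) \<longleftrightarrow> ((\<lambda>y. f (c * y)) \<longlongrightarrow> l) (at a)"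
  unfolding filtermap_times_at[OF assms, symmetric] by (simp add: filterlim_filtermap)

lemma ex_power_int_mult_annulus:
  fixes p x :: complex
  assumes p: "0 < norm p" "norm p < 1" and x: "x \<noteq> 0"
  obtains k y where "x = p powi k * y" "norm p \<le> norm y" "norm y \<le> 1"
proof -
  have "0 < norm x" using x by simp
  then obtain k where k: "norm p powi (k + 1) < norm x" "norm x \<le> norm p powi k"
    by (rule ex_power_int_bracket[OF p])
  define y where "y = x / p powi k"
  have y: "norm y = norm x / norm p powi k" by (simp add: y_def norm_divide norm_power_int)
  have "0 < norm p powi k" using p by simp
  then have "norm y \<le> 1" "norm p \<le> norm y"
    using k p by (simp_all add: y pos_le_divide_eq power_int_add mult.commute)
  moreover have "x = p powi k * y" using p by (auto simp: y_def)
  ultimately show ?thesis using that by blast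
qed

(* The functional
   equation moves any point of C - {0} into the annulus |p| <= |x| <= 1 without decreasing |Psi|,
   because |mu| <= 1 inside and |mu| >= 1 outside the unit circle; so Psi is bounded, and
   Liouville's theorem for Psi o exp makes it constant. *)
locale q_liouville =
  fixes p :: complex and C :: "complex set" and \<mu> \<Phi> :: "complex \<Rightarrow> complex"
  assumes norm_p: "0 < norm p" "norm p < 1"
    and finite_C: "finite C" and zero_notin_C: "0 \<notin> C"
    and isCont_\<mu>: "\<And>x. isCont \<mu> x"
    and \<mu>_nonzero: "\<And>x. x \<noteq> 0 \<Longrightarrow> \<mu> x \<noteq> 0"
    and norm_\<mu>_inside: "\<And>x. norm x \<le> 1 \<Longrightarrow> norm (\<mu> x) \<le> 1"
    and norm_\<mu>_outside: "\<And>x. 1 \<le> norm x \<Longrightarrow> 1 \<le> norm (\<mu> x)"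
    and differentiable: "\<And>x. x \<noteq> 0 \<Longrightarrow> x \<notin> (\<Union>c\<in>C. geom_orbit p c) \<Longrightarrow> \<Phi> field_differentiable at x"
    and functional_eq: "\<And>x. x \<noteq> 0 \<Longrightarrow> x \<notin> (\<Union>c\<in>C. geom_orbit p c) \<Longrightarrow> \<Phi> (p * x) = \<mu> x * \<Phi> x"
    and limit_at_C: "\<And>c. c \<in> C \<Longrightarrow> \<exists>l. (\<Phi> \<longlongrightarrow> l) (at c)"
begin

abbreviation singular :: "complex set" where
  "singular \<equiv> \<Union>c\<in>C. geom_orbit p c"

lemma p_nonzero: "p \<noteq> 0"
  using norm_p by auto

lemma eventually_regular:
  assumes "x \<noteq> 0"
  shows "eventually (\<lambda>y. y \<noteq> 0 \<and> y \<notin> singular) (at x)"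
proof -
  have "\<forall>c\<in>C. eventually (\<lambda>y. y \<notin> geom_orbit p c) (at x)"
    using not_islimpt_geom_orbit[OF norm_p assms] by (simp add: islimpt_iff_eventually)
  then have "eventually (\<lambda>y. \<forall>c\<in>C. y \<notin> geom_orbit p c) (at x)"
    by (rule eventually_ball_finite[OF finite_C])
  moreover have "eventually (\<lambda>y. y \<noteq> 0) (at x)"
    using tendsto_imp_eventually_ne[OF tendsto_ident_at assms] .
  ultimately show ?thesis by eventually_elim auto
qed

lemma limit_at_mult_iff:
  assumes "x \<noteq> 0"
  shows "(\<exists>l. (\<Phi> \<longlongrightarrow> l) (at (p * x))) \<longleftrightarrow> (\<exists>l. (\<Phi> \<longlongrightarrow> l) (at x))"
proof -
  have "eventually (\<lambda>y. \<Phi> (p * y) = \<mu> y * \<Phi> y) (at x)"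
    using eventually_regular[OF assms] by eventually_elim (use functional_eq in blast)
  then have "(\<exists>l. (\<Phi> \<longlongrightarrow> l) (at (p * x))) \<longleftrightarrow> (\<exists>l. ((\<lambda>y. \<mu> y * \<Phi> y) \<longlongrightarrow> l) (at x))"
    unfolding tendsto_at_mult_iff[OF p_nonzero] by (simp add: tendsto_cong)
  also have "\<dots> \<longleftrightarrow> (\<exists>l. (\<Phi> \<longlongrightarrow> l) (at x))"
  proof
    assume "\<exists>l. ((\<lambda>y. \<mu> y * \<Phi> y) \<longlongrightarrow> l) (at x)"
    then obtain l where "((\<lambda>y. \<mu> y * \<Phi> y) \<longlongrightarrow> l) (at x)" by blast
    then have "((\<lambda>y. \<mu> y * \<Phi> y / \<mu> y) \<longlongrightarrow> l / \<mu> x) (at x)"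
      using isCont_\<mu>[of x] \<mu>_nonzero[OF assms] by (intro tendsto_divide) (auto simp: isCont_def)
    moreover have "eventually (\<lambda>y. \<mu> y * \<Phi> y / \<mu> y = \<Phi> y) (at x)"
      using eventually_regular[OF assms] by eventually_elim (simp add: \<mu>_nonzero)
    ultimately show "\<exists>l. (\<Phi> \<longlongrightarrow> l) (at x)" by (auto simp: tendsto_cong)
  next
    assume "\<exists>l. (\<Phi> \<longlongrightarrow> l) (at x)"
    then obtain l where "(\<Phi> \<longlongrightarrow> l) (at x)" by blast
    then have "((\<lambda>y. \<mu> y * \<Phi> y) \<longlongrightarrow> \<mu> x * l) (at x)"
      using isCont_\<mu>[of x] by (intro tendsto_mult) (auto simp: isCont_def)
    then show "\<exists>l. ((\<lambda>y. \<mu> y * \<Phi> y) \<longlongrightarrow> l) (at x)" by blast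
  qed
  finally show ?thesis .
qed

lemma limit_at_singular:
  assumes "s \<in> singular"
  shows "\<exists>l. (\<Phi> \<longlongrightarrow> l) (at s)"
proof -
  obtain c k where c: "c \<in> C" and s: "s = c * p powi k"
    using assms by (auto simp: geom_orbit_def)
  have "c \<noteq> 0" using c zero_notin_C by auto
  have "\<exists>l. (\<Phi> \<longlongrightarrow> l) (at (c * p powi k))"
  proof (induction k rule: int_induct[where k = 0])
    case base
    then show ?case using limit_at_C[OF c] by simp
  next
    case (step1 i)
    have "c * p powi (i + 1) = p * (c * p powi i)" using p_nonzero by (simp add: power_int_add)
    moreover have "c * p powi i \<noteq> 0" using \<open>c \<noteq> 0\<close> p_nonzero by simp
    ultimately show ?case using step1 limit_at_mult_iff by metis
  next
    case (step2 i)
    have "c * p powi i = p * (c * p powi (i - 1))" using p_nonzero by (simp add: power_int_diff)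
    moreover have "c * p powi (i - 1) \<noteq> 0" using \<open>c \<noteq> 0\<close> p_nonzero by simp
    ultimately show ?case using step2 limit_at_mult_iff by metis
  qed
  then show ?thesis unfolding s .
qed

definition \<Psi> :: "complex \<Rightarrow> complex" where
  "\<Psi> x = (if x \<in> singular then Lim (at x) \<Phi> else \<Phi> x)"

lemma tendsto_\<Psi>:
  assumes "x \<noteq> 0"
  shows "(\<Phi> \<longlongrightarrow> \<Psi> x) (at x)"
proof (cases "x \<in> singular")
  case True
  then show ?thesis using limit_at_singular tendsto_Lim[OF at_neq_bot] by (auto simp: \<Psi>_def)
next
  case False
  have "continuous (at x) \<Phi>"
    using differentiable[OF assms False] by (rule field_differentiable_imp_continuous_at)
  then show ?thesis using False by (simp add: \<Psi>_def continuous_at)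
qed

lemma analytic_on_\<Psi>: "\<Psi> analytic_on -{0}"
  unfolding analytic_on_def
proof
  fix x0 :: complex assume "x0 \<in> -{0}"
  then have x0: "x0 \<noteq> 0" by simp
  obtain e where e: "e > 0" and regular: "\<And>y. y \<noteq> x0 \<Longrightarrow> dist y x0 < e \<Longrightarrow> y \<noteq> 0 \<and> y \<notin> singular"
    using eventually_regular[OF x0] unfolding eventually_at by blast
  have "\<Phi> holomorphic_on ball x0 e - {x0}"
    unfolding holomorphic_on_def
    using regular differentiable field_differentiable_at_within by (force simp: dist_commute)
  then have "(\<lambda>y. if y = x0 then \<Psi> x0 else \<Phi> y) holomorphic_on ball x0 e"
    by (rule removable_singularity[OF _ open_ball tendsto_\<Psi>[OF x0]])
  moreover have "(if y = x0 then \<Psi> x0 else \<Phi> y) = \<Psi> y" if "y \<in> ball x0 e" for y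
    using regular[of y] that by (auto simp: \<Psi>_def dist_commute)
  ultimately have "\<Psi> holomorphic_on ball x0 e" by (rule holomorphic_transform)
  then show "\<exists>e>0. \<Psi> holomorphic_on ball x0 e" using e by blast
qed

lemma \<Psi>_mult:
  assumes "x \<noteq> 0"
  shows "\<Psi> (p * x) = \<mu> x * \<Psi> x"
proof -
  have "eventually (\<lambda>y. \<mu> y * \<Phi> y = \<Phi> (p * y)) (at x)"
    using eventually_regular[OF assms] by eventually_elim (use functional_eq in simp)
  moreover have "((\<lambda>y. \<mu> y * \<Phi> y) \<longlongrightarrow> \<mu> x * \<Psi> x) (at x)"
    using isCont_\<mu>[of x] tendsto_\<Psi>[OF assms] by (intro tendsto_mult) (auto simp: isCont_def)
  ultimately have "((\<lambda>y. \<Phi> (p * y)) \<longlongrightarrow> \<mu> x * \<Psi> x) (at x)"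
    by (rule tendsto_cong[THEN iffD1])
  moreover have "((\<lambda>y. \<Phi> (p * y)) \<longlongrightarrow> \<Psi> (p * x)) (at x)"
    using tendsto_\<Psi>[of "p * x"] assms p_nonzero by (simp add: tendsto_at_mult_iff)
  ultimately show ?thesis by (rule tendsto_unique[OF at_neq_bot, symmetric])
qed

lemma norm_\<Psi>_mult_le:
  assumes "x \<noteq> 0" "norm x \<le> 1"
  shows "norm (\<Psi> (p * x)) \<le> norm (\<Psi> x)"
proof -
  have "norm (\<Psi> (p * x)) = norm (\<mu> x) * norm (\<Psi> x)" by (simp add: \<Psi>_mult[OF assms(1)] norm_mult)
  also have "\<dots> \<le> norm (\<Psi> x)" using norm_\<mu>_inside[OF assms(2)] by (intro mult_left_le_one_le) auto
  finally show ?thesis .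
qed

lemma norm_\<Psi>_le_mult:
  assumes "1 \<le> norm x"
  shows "norm (\<Psi> x) \<le> norm (\<Psi> (p * x))"
proof -
  have "x \<noteq> 0" using assms by auto
  have "norm (\<Psi> x) \<le> norm (\<mu> x) * norm (\<Psi> x)"
    using norm_\<mu>_outside[OF assms] mult_right_mono[of 1 "norm (\<mu> x)" "norm (\<Psi> x)"] by simp
  also have "\<dots> = norm (\<Psi> (p * x))" by (simp add: \<Psi>_mult[OF \<open>x \<noteq> 0\<close>] norm_mult)
  finally show ?thesis .
qed

lemma norm_\<Psi>_orbit_le:
  assumes y: "norm p \<le> norm y" "norm y \<le> 1"
  shows "norm (\<Psi> (p powi k * y)) \<le> norm (\<Psi> y)"
proof (induction k rule: int_induct[where k = 0])
  case (step1 i)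
  have "norm p powi i \<le> 1" using step1.hyps norm_p by (intro power_int_le_one) auto
  then have "norm (p powi i * y) \<le> 1"
    using y by (auto simp: norm_mult norm_power_int intro: mult_le_one)
  moreover have "p powi i * y \<noteq> 0" using y norm_p by auto
  ultimately have "norm (\<Psi> (p * (p powi i * y))) \<le> norm (\<Psi> (p powi i * y))"
    by (rule norm_\<Psi>_mult_le[rotated])
  then show ?case using step1.IH p_nonzero by (simp add: power_int_add mult_ac)
next
  case (step2 i)
  have "1 \<le> norm p powi i"
    using power_int_le_iff_less_1[of "norm p" 0 i] step2.hyps norm_p by simp
  also have "\<dots> = norm p powi (i - 1) * norm p"
    using norm_p by (simp add: power_int_diff)
  also have "\<dots> \<le> norm (p powi (i - 1) * y)"
    using y norm_p by (auto simp: norm_mult norm_power_int intro: mult_left_mono)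
  finally have "norm (\<Psi> (p powi (i - 1) * y)) \<le> norm (\<Psi> (p * (p powi (i - 1) * y)))"
    by (rule norm_\<Psi>_le_mult)
  then show ?case using step2.IH p_nonzero by (simp add: power_int_diff mult_ac)
qed simp

lemma \<Psi>_bounded: "\<exists>M. \<forall>x. x \<noteq> 0 \<longrightarrow> norm (\<Psi> x) \<le> M"
proof -
  define K where "K = cball 0 1 - ball (0::complex) (norm p)"
  have "K \<subseteq> -{0}" using norm_p by (auto simp: K_def)
  then have "continuous_on K \<Psi>"
    using analytic_on_\<Psi> by (meson analytic_imp_holomorphic holomorphic_on_imp_continuous_on holomorphic_on_subset)
  moreover have "compact K" unfolding K_def by (intro compact_diff) auto
  ultimately obtain M where M: "\<And>y. y \<in> K \<Longrightarrow> norm (\<Psi> y) \<le> M"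
    using compact_imp_bounded[OF compact_continuous_image] by (force simp: bounded_iff)
  have "norm (\<Psi> x) \<le> M" if x: "x \<noteq> 0" for x
  proof -
    obtain k y where xy: "x = p powi k * y" and y: "norm p \<le> norm y" "norm y \<le> 1"
      using ex_power_int_mult_annulus[OF norm_p x] by blast
    have "norm (\<Psi> x) \<le> norm (\<Psi> y)" unfolding xy using y by (rule norm_\<Psi>_orbit_le)
    also have "\<dots> \<le> M" using y by (intro M) (simp add: K_def)
    finally show ?thesis .
  qed
  then show ?thesis by blast
qed

theorem constant_off_singular:
  obtains c where "\<And>x. x \<noteq> 0 \<Longrightarrow> x \<notin> singular \<Longrightarrow> \<Phi> x = c" and "\<And>x. x \<noteq> 0 \<Longrightarrow> c = \<mu> x * c"
proof -
  obtain M where M: "\<And>x. x \<noteq> 0 \<Longrightarrow> norm (\<Psi> x) \<le> M" using \<Psi>_bounded by blast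
  have holo: "(\<Psi> \<circ> exp) holomorphic_on UNIV"
    using analytic_imp_holomorphic[OF analytic_on_\<Psi>]
    by (intro holomorphic_on_compose_gen[where t = "-{0}"]) (auto intro: holomorphic_intros)
  have "bounded (range (\<Psi> \<circ> exp))"
    unfolding bounded_iff using M by (intro exI[of _ M]) auto
  then obtain c where c: "\<And>w. (\<Psi> \<circ> exp) w = c"
    using Liouville_theorem[OF holo] by (auto simp: constant_on_def)
  then have \<Psi>_eq: "\<Psi> x = c" if "x \<noteq> 0" for x using c[of "ln x"] that by simp
  show ?thesis
  proof (rule that)
    show "\<Phi> x = c" if "x \<noteq> 0" "x \<notin> singular" for x
      using \<Psi>_eq[OF that(1)] that(2) by (simp add: \<Psi>_def)
    show "c = \<mu> x * c" if "x \<noteq> 0" for x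
      using \<Psi>_mult[OF that] \<Psi>_eq[OF that] \<Psi>_eq[of "p * x"] that p_nonzero by simp
  qed
qed

end

lemma difference_quotient_limit:
  assumes "f field_differentiable at a"
  shows "\<exists>D. ((\<lambda>x. (f x - f a) / (x - a)) \<longlongrightarrow> D) (at a)"
  using assms by (auto simp: field_differentiable_def has_field_derivative_iff)

lemma theta_series_div_jtheta_limit_at_1:
  assumes p: "0 < norm p" "norm p < 1"
  shows "\<exists>l. ((\<lambda>w. theta_series w p / jtheta w p) \<longlongrightarrow> l) (at 1)"
proof -
  have "(\<lambda>w. theta_series w p) field_differentiable at 1"
    using analytic_on_theta_series[OF p] by (simp add: analytic_on_imp_differentiable_at)
  then obtain D where D: "((\<lambda>w. (theta_series w p - theta_series 1 p) / (w - 1)) \<longlongrightarrow> D) (at 1)"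
    by (blast dest: difference_quotient_limit)
  have "isCont (\<lambda>w. jtheta_cofactor w p) 1"
    using p by (intro field_differentiable_imp_continuous_at derivative_intros) auto
  moreover have "jtheta_cofactor 1 p \<noteq> 0"
    using qpoch_self_nonzero[OF p(2)] by (simp add: jtheta_cofactor_1)
  ultimately have "((\<lambda>w. (theta_series w p - theta_series 1 p) / (w - 1) * (- 1 / jtheta_cofactor w p))
      \<longlongrightarrow> D * (- 1 / jtheta_cofactor 1 p)) (at 1)"
    using D by (intro tendsto_intros) (auto simp: isCont_def)
  moreover have "(theta_series w p - theta_series 1 p) / (w - 1) * (- 1 / jtheta_cofactor w p)
      = theta_series w p / jtheta w p" for w
  proof -
    have "(1 - w) * jtheta_cofactor w p = - ((w - 1) * jtheta_cofactor w p)" by (simp add: algebra_simps)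
    then show ?thesis
      unfolding jtheta_eq_cofactor[OF p(2)] theta_series_1[OF p] by (simp add: divide_minus_right)
  qed
  ultimately show ?thesis by auto
qed

lemma q_liouville_theta_series_div_jtheta:
  assumes p: "0 < norm p" "norm p < 1"
  shows "q_liouville p {1} (\<lambda>_. 1) (\<lambda>w. theta_series w p / jtheta w p)"
proof
  have p0: "p \<noteq> 0" using p by auto
  fix w :: complex assume w: "w \<noteq> 0" "w \<notin> (\<Union>c\<in>{1}. geom_orbit p c)"
  then have "jtheta w p \<noteq> 0" using jtheta_eq_0_iff[OF p w(1)] by simp
  then show "(\<lambda>w. theta_series w p / jtheta w p) field_differentiable at w"
    using p w by (intro derivative_intros) auto
  show "theta_series (p * w) p / jtheta (p * w) p = 1 * (theta_series w p / jtheta w p)"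
    using theta_series_mult[OF p w(1)] jtheta_mult[OF p(2) p0 w(1)] w(1) by simp
next
  show "\<exists>l. ((\<lambda>w. theta_series w p / jtheta w p) \<longlongrightarrow> l) (at c)" if "c \<in> {1}" for c
    using that theta_series_div_jtheta_limit_at_1[OF p] by simp
qed (use p in auto)

(* By the Jacobi triple product C = 1; only the existence of C is needed. *)
lemma theta_series_eq_const_mult_jtheta:
  assumes p: "0 < norm p" "norm p < 1"
  obtains C where "\<And>w. w \<noteq> 0 \<Longrightarrow> jtheta w p \<noteq> 0 \<Longrightarrow> theta_series w p = C * jtheta w p"
proof -
  interpret q_liouville p "{1}" "\<lambda>_. 1" "\<lambda>w. theta_series w p / jtheta w p"
    by (rule q_liouville_theta_series_div_jtheta[OF p])
  obtain C where "\<And>w. w \<noteq> 0 \<Longrightarrow> w \<notin> singular \<Longrightarrow> theta_series w p / jtheta w p = C"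
    by (rule constant_off_singular) blast
  then have "theta_series w p = C * jtheta w p" if "w \<noteq> 0" "jtheta w p \<noteq> 0" for w
    using that jtheta_eq_0_iff[OF p that(1)] by (simp add: divide_eq_eq)
  then show ?thesis by (rule that)
qed

section \<open>The change-of-z formula for m\<close>

lemma m_defined_iff:
  assumes p: "0 < norm p" "norm p < 1"
  shows "m_defined x p z \<longleftrightarrow> x \<noteq> 0 \<and> z \<noteq> 0 \<and> jtheta z p \<noteq> 0 \<and> jtheta (x * z) p \<noteq> 0"
proof -
  have "p \<noteq> 0" using p by auto
  then show ?thesis
    unfolding m_defined_def using lerch_denominators_nonzero_iff[of p x z] jtheta_eq_0_iff[OF p, of "x * z"]
    by auto
qed

lemma lerch_sum_minus_pole_limit:
  assumes p: "0 < norm p" "norm p < 1" and w: "w \<noteq> 0"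
    and g: "g field_differentiable at (1 / w)" "g (1 / w) = - w"
  shows "\<exists>l. ((\<lambda>x. lerch_sum x p w - g x / (1 - x * w)) \<longlongrightarrow> l) (at (1 / w))"
proof -
  define S where "S x = (\<Sum>\<^sub>\<infinity>r\<in>UNIV - {1}. lerch_term x p w r)" for x
  obtain D where D: "((\<lambda>x. (g x - g (1 / w)) / (x - 1 / w)) \<longlongrightarrow> D) (at (1 / w))"
    using difference_quotient_limit[OF g(1)] by blast
  have "((\<lambda>x. S x + (g x - g (1 / w)) / (x - 1 / w) * (1 / w)) \<longlongrightarrow> S (1 / w) + D * (1 / w)) (at (1 / w))"
    using isCont_lerch_sum_regular_part[OF p w] D unfolding S_def isCont_def by (intro tendsto_intros)
  moreover have "eventually (\<lambda>x. S x + (g x - g (1 / w)) / (x - 1 / w) * (1 / w)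
      = lerch_sum x p w - g x / (1 - x * w)) (at (1 / w))"
  proof -
    have "eventually (\<lambda>x. x \<noteq> 0) (at (1 / w))"
      using w by (intro tendsto_imp_eventually_ne[OF tendsto_ident_at]) simp
    moreover have "eventually (\<lambda>x. x \<noteq> 1 / w) (at (1 / w))"
      by (simp add: eventually_at_filter)
    ultimately show ?thesis
    proof eventually_elim
      case (elim x)
      define u where "u = 1 - x * w"
      have "u \<noteq> 0" using elim w by (auto simp: u_def field_simps)
      moreover have diff: "x - 1 / w = - u / w" using w by (simp add: u_def field_simps)
      ultimately show ?case
        unfolding lerch_sum_pole_split[OF p w elim(1)] S_def g(2) u_def[symmetric] diff
        using w by (simp add: field_simps)
    qed
  qed
  ultimately show ?thesis by (auto simp: tendsto_cong)
qed

lemma appell_m_mult: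
  assumes p: "0 < norm p" "norm p < 1"
  obtains C where "\<And>x z. m_defined x p z \<Longrightarrow> appell_m (p * x) p z = C - x * appell_m x p z"
proof -
  obtain C where C: "\<And>w. w \<noteq> 0 \<Longrightarrow> jtheta w p \<noteq> 0 \<Longrightarrow> theta_series w p = C * jtheta w p"
    using theta_series_eq_const_mult_jtheta[OF p] by blast
  have "appell_m (p * x) p z = C - x * appell_m x p z" if "m_defined x p z" for x z
  proof -
    have x: "x \<noteq> 0" and z: "z \<noteq> 0" "jtheta z p \<noteq> 0" and "jtheta (x * z) p \<noteq> 0"
      using that m_defined_iff[OF p] by auto
    then have "x * z \<notin> geom_orbit p 1" using jtheta_eq_0_iff[OF p] by auto
    then show ?thesis
      unfolding appell_m_eq_lerch_sum lerch_sum_mult[OF p z(1) x \<open>x * z \<notin> _\<close>] C[OF z]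
      using z(2) by (simp add: diff_divide_distrib)
  qed
  then show ?thesis by (rule that)
qed

(* The right-hand side of Hickerson and Mortenson's change-of-z formula for m. *)
definition appell_zdiff :: "complex \<Rightarrow> complex \<Rightarrow> complex \<Rightarrow> complex \<Rightarrow> complex" where
  "appell_zdiff x p z0 z1 = z0 * qpoch p p ^ 3 * jtheta (z1 / z0) p * jtheta (x * z0 * z1) p
     / (jtheta z0 p * jtheta z1 p * jtheta (x * z0) p * jtheta (x * z1) p)"

lemma appell_zdiff_swap:
  assumes "norm p < 1" "p \<noteq> 0" "z0 \<noteq> 0" "z1 \<noteq> 0"
  shows "appell_zdiff x p z1 z0 = - appell_zdiff x p z0 z1"
proof -
  have swap: "z1 * jtheta (z0 / z1) p = - (z0 * jtheta (z1 / z0) p)"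
    using jtheta_inverse[OF assms(1,2), of "z1 / z0"] assms by simp
  have "appell_zdiff x p z1 z0 = (z1 * jtheta (z0 / z1) p) * (qpoch p p ^ 3 * jtheta (x * z0 * z1) p)
      / (jtheta z0 p * jtheta z1 p * jtheta (x * z0) p * jtheta (x * z1) p)"
    by (simp add: appell_zdiff_def mult_ac)
  also have "\<dots> = - appell_zdiff x p z0 z1"
    unfolding swap by (simp add: appell_zdiff_def mult_ac)
  finally show ?thesis .
qed

lemma appell_zdiff_mult:
  assumes "norm p < 1" "p \<noteq> 0" "x \<noteq> 0" "z0 \<noteq> 0" "z1 \<noteq> 0"
  shows "appell_zdiff (p * x) p z0 z1 = - x * appell_zdiff x p z0 z1"
proof -
  have shift: "jtheta (p * x * c) p = - jtheta (x * c) p / (x * c)" if "c \<noteq> 0" for c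
    using jtheta_mult[OF assms(1,2), of "x * c"] assms(3) that by (simp add: mult.assoc)
  have "z0 * z1 \<noteq> 0" using assms by simp
  show ?thesis
    unfolding appell_zdiff_def shift[OF assms(4)] shift[OF assms(5)] shift[OF \<open>z0 * z1 \<noteq> 0\<close>]
      mult.assoc[of "p * x"] mult.assoc[of x z0 z1]
    using assms(3-5)
    by (cases "jtheta (x * z0) p * jtheta (x * z1) p = 0") (auto simp: field_simps)
qed

lemma appell_m_diff_limit_at_pole:
  assumes p: "0 < norm p" "norm p < 1" and z: "z0 \<noteq> 0" "z1 \<noteq> 0"
    and j: "jtheta z0 p \<noteq> 0" "jtheta z1 p \<noteq> 0" "jtheta (z1 / z0) p \<noteq> 0"
  shows "\<exists>l. ((\<lambda>x. appell_m x p z1 - appell_m x p z0 - appell_zdiff x p z0 z1) \<longlongrightarrow> l) (at (1 / z1))"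
proof -
  have p0: "p \<noteq> 0" using p by auto
  define g where "g x = z0 * qpoch p p ^ 3 * jtheta (z1 / z0) p * jtheta (x * z0 * z1) p
      / (jtheta z0 p * jtheta (x * z0) p * jtheta_cofactor (x * z1) p)" for x
  have inverse: "jtheta (z0 / z1) p = - (z0 / z1) * jtheta (z1 / z0) p"
    using jtheta_inverse[OF p(2) p0, of "z1 / z0"] z by simp
  then have "jtheta (z0 / z1) p \<noteq> 0" using z j by simp
  have "g (1 / z1) = - z1"
    using z j qpoch_self_nonzero[OF p(2)]
    by (simp add: g_def inverse jtheta_cofactor_1 field_simps)
  moreover have "g field_differentiable at (1 / z1)"
    unfolding g_def using p z j \<open>jtheta (z0 / z1) p \<noteq> 0\<close> qpoch_self_nonzero[OF p(2)]
    by (intro derivative_intros) (auto simp: jtheta_cofactor_1)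
  ultimately obtain l where "((\<lambda>x. lerch_sum x p z1 - g x / (1 - x * z1)) \<longlongrightarrow> l) (at (1 / z1))"
    using lerch_sum_minus_pole_limit[OF p z(2)] by blast
  moreover have "isCont (\<lambda>x. appell_m x p z0) (1 / z1)"
    using p z \<open>jtheta (z0 / z1) p \<noteq> 0\<close> jtheta_eq_0_iff[OF p, of "z0 / z1"]
    by (intro field_differentiable_imp_continuous_at field_differentiable_appell_m) auto
  ultimately have "((\<lambda>x. (lerch_sum x p z1 - g x / (1 - x * z1)) / jtheta z1 p - appell_m x p z0)
      \<longlongrightarrow> l / jtheta z1 p - appell_m (1 / z1) p z0) (at (1 / z1))"
    using j(2) by (intro tendsto_intros) (auto simp: isCont_def)
  moreover have "appell_zdiff x p z0 z1 = g x / (1 - x * z1) / jtheta z1 p" for x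
    unfolding appell_zdiff_def g_def jtheta_eq_cofactor[OF p(2), of "x * z1"]
    by (simp add: divide_divide_eq_left ac_simps)
  then have "(\<lambda>x. (lerch_sum x p z1 - g x / (1 - x * z1)) / jtheta z1 p - appell_m x p z0)
      = (\<lambda>x. appell_m x p z1 - appell_m x p z0 - appell_zdiff x p z0 z1)"
    by (simp add: appell_m_eq_lerch_sum diff_divide_distrib algebra_simps)
  ultimately show ?thesis by auto
qed

lemma m_defined_off_orbit:
  assumes p: "0 < norm p" "norm p < 1" and z: "z \<noteq> 0" "jtheta z p \<noteq> 0"
    and y: "y \<noteq> 0" "y \<notin> geom_orbit p (1 / z)"
  shows "m_defined y p z"
  using y z jtheta_eq_0_iff[OF p, of "y * z"] mem_geom_orbit_inverse_iff[OF z(1)]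
  by (simp add: m_defined_iff[OF p])

lemma q_liouville_appell_m_remainder:
  assumes p: "0 < norm p" "norm p < 1" and z: "z0 \<noteq> 0" "z1 \<noteq> 0"
    and jz: "jtheta z0 p \<noteq> 0" "jtheta z1 p \<noteq> 0" and j: "jtheta (z1 / z0) p \<noteq> 0"
  shows "q_liouville p {1 / z0, 1 / z1} uminus
    (\<lambda>y. appell_m y p z1 - appell_m y p z0 - appell_zdiff y p z0 z1)"
proof
  have p0: "p \<noteq> 0" using p by auto
  obtain C where C: "\<And>y z. m_defined y p z \<Longrightarrow> appell_m (p * y) p z = C - y * appell_m y p z"
    by (rule appell_m_mult[OF p]) (rule that)
  fix y assume y: "y \<noteq> 0" "y \<notin> (\<Union>c\<in>{1 / z0, 1 / z1}. geom_orbit p c)"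
  then have m: "m_defined y p z0" "m_defined y p z1"
    using m_defined_off_orbit[OF p z(1) jz(1)] m_defined_off_orbit[OF p z(2) jz(2)] by auto
  then show "appell_m (p * y) p z1 - appell_m (p * y) p z0 - appell_zdiff (p * y) p z0 z1
      = - y * (appell_m y p z1 - appell_m y p z0 - appell_zdiff y p z0 z1)"
    unfolding C[OF m(1)] C[OF m(2)] appell_zdiff_mult[OF p(2) p0 y(1) z] by (simp add: algebra_simps)
  show "(\<lambda>y. appell_m y p z1 - appell_m y p z0 - appell_zdiff y p z0 z1) field_differentiable at y"
    using m p y z jz jtheta_eq_0_iff[OF p] unfolding appell_zdiff_def m_defined_iff[OF p]
    by (intro derivative_intros field_differentiable_appell_m) auto
next
  have p0: "p \<noteq> 0" using p by auto
  have "jtheta (z0 / z1) p \<noteq> 0"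
    using jtheta_inverse[OF p(2) p0, of "z1 / z0"] z j by simp
  then obtain l where "((\<lambda>y. appell_m y p z0 - appell_m y p z1 - appell_zdiff y p z1 z0) \<longlongrightarrow> l) (at (1 / z0))"
    using appell_m_diff_limit_at_pole[OF p z(2,1) jz(2,1)] by blast
  then have "((\<lambda>y. appell_m y p z1 - appell_m y p z0 - appell_zdiff y p z0 z1) \<longlongrightarrow> - l) (at (1 / z0))"
    using tendsto_minus by (fastforce simp: appell_zdiff_swap[OF p(2) p0 z])
  moreover have "\<exists>l. ((\<lambda>y. appell_m y p z1 - appell_m y p z0 - appell_zdiff y p z0 z1) \<longlongrightarrow> l) (at (1 / z1))"
    by (rule appell_m_diff_limit_at_pole[OF p z jz j])
  ultimately show "\<exists>l. ((\<lambda>y. appell_m y p z1 - appell_m y p z0 - appell_zdiff y p z0 z1) \<longlongrightarrow> l) (at c)"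
    if "c \<in> {1 / z0, 1 / z1}" for c
    using that by blast
qed (use p z in auto)

theorem appell_m_change_z:
  assumes p: "0 < norm p" "norm p < 1"
    and m: "m_defined x p z0" "m_defined x p z1" and j: "jtheta (z1 / z0) p \<noteq> 0"
  shows "appell_m x p z1 - appell_m x p z0 = appell_zdiff x p z0 z1"
proof -
  have x: "x \<noteq> 0" and z: "z0 \<noteq> 0" "z1 \<noteq> 0" and jz: "jtheta z0 p \<noteq> 0" "jtheta z1 p \<noteq> 0"
    and jx: "jtheta (x * z0) p \<noteq> 0" "jtheta (x * z1) p \<noteq> 0"
    using m m_defined_iff[OF p] by auto
  interpret q_liouville p "{1 / z0, 1 / z1}" uminus
    "\<lambda>y. appell_m y p z1 - appell_m y p z0 - appell_zdiff y p z0 z1"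
    by (rule q_liouville_appell_m_remainder[OF p z jz j])
  obtain c where c: "\<And>y. y \<noteq> 0 \<Longrightarrow> y \<notin> singular \<Longrightarrow> appell_m y p z1 - appell_m y p z0 - appell_zdiff y p z0 z1 = c"
    and c_mult: "\<And>y. y \<noteq> 0 \<Longrightarrow> c = - y * c"
    by (rule constant_off_singular) (rule that)
  have "c = 0" using c_mult[of 1] by simp
  moreover have "x \<notin> singular"
    using x z jx jtheta_eq_0_iff[OF p] mem_geom_orbit_inverse_iff[OF z(1)] mem_geom_orbit_inverse_iff[OF z(2)]
    by auto
  ultimately show ?thesis using c[OF x] by simp
qed

section \<open>Dissection by q^3 and the identity\<close>

lemma jtheta_three_term:
  assumes p: "0 < norm p" "norm p < 1"
    and m: "m_defined x p u" "m_defined x p v" "m_defined x p w"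
    and j: "jtheta (v / u) p \<noteq> 0" "jtheta (w / v) p \<noteq> 0" "jtheta (w / u) p \<noteq> 0"
  shows "u * jtheta (v / u) p * jtheta (x * u * v) p * jtheta w p * jtheta (x * w) p
       + v * jtheta (w / v) p * jtheta (x * v * w) p * jtheta u p * jtheta (x * u) p
       = u * jtheta (w / u) p * jtheta (x * u * w) p * jtheta v p * jtheta (x * v) p"
proof -
  have "appell_zdiff x p u w = appell_m x p w - appell_m x p u"
    using appell_m_change_z[OF p m(1,3) j(3)] by simp
  also have "\<dots> = (appell_m x p v - appell_m x p u) + (appell_m x p w - appell_m x p v)"
    by simp
  also have "\<dots> = appell_zdiff x p u v + appell_zdiff x p v w"
    using appell_m_change_z[OF p m(1,2) j(1)] appell_m_change_z[OF p m(2,3) j(2)] by simp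
  finally have cocycle: "appell_zdiff x p u v + appell_zdiff x p v w = appell_zdiff x p u w" ..
  define N where "N = jtheta u p * jtheta v p * jtheta w p * jtheta (x * u) p * jtheta (x * v) p
    * jtheta (x * w) p / qpoch p p ^ 3"
  have "jtheta u p \<noteq> 0" "jtheta v p \<noteq> 0" "jtheta w p \<noteq> 0"
    "jtheta (x * u) p \<noteq> 0" "jtheta (x * v) p \<noteq> 0" "jtheta (x * w) p \<noteq> 0"
    using m m_defined_iff[OF p] by auto
  moreover have "qpoch p p \<noteq> 0" using qpoch_self_nonzero p by simp
  ultimately have "N * appell_zdiff x p u v
      = u * jtheta (v / u) p * jtheta (x * u * v) p * jtheta w p * jtheta (x * w) p"
    "N * appell_zdiff x p v w = v * jtheta (w / v) p * jtheta (x * v * w) p * jtheta u p * jtheta (x * u) p"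
    "N * appell_zdiff x p u w = u * jtheta (w / u) p * jtheta (x * u * w) p * jtheta v p * jtheta (x * v) p"
    by (simp_all add: N_def appell_zdiff_def field_simps)
  then show ?thesis using cocycle by (metis distrib_left)
qed

lemma jtheta_cube_base_nonzero:
  fixes q :: complex
  assumes q: "0 < norm q" "norm q < 1"
  shows "jtheta q (q^3) \<noteq> 0"
proof -
  have Q: "0 < norm (q^3)" "norm (q^3) < 1"
    using q by (simp_all add: norm_power power_less_one_iff)
  have "q \<notin> geom_orbit (q^3) 1"
  proof
    assume "q \<in> geom_orbit (q^3) 1"
    then obtain k where "q powi 1 = q powi (3 * k)"
      by (auto simp: geom_orbit_def power_int_mult)
    then have "norm q powi 1 = norm q powi (3 * k)" by (metis norm_power_int)
    then have "1 = 3 * k" using power_int_eq_iff_less_1[OF q] by blast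
    then show False by presburger
  qed
  then show ?thesis using jtheta_eq_0_iff[OF Q] q by auto
qed

lemma jtheta_cubic_three_term:
  fixes q z :: complex
  defines "Q \<equiv> q^3"
  assumes q: "0 < norm q" "norm q < 1" and z: "z \<noteq> 0"
    and j: "jtheta z Q \<noteq> 0" "jtheta (q * z) Q \<noteq> 0" "jtheta (q / z) Q \<noteq> 0"
  shows "jtheta (z^2) Q * jtheta (q * z) Q * jtheta (q / z) Q
       = jtheta z Q * jtheta (q * z) Q * jtheta (q * z^2) Q
         + z * jtheta z Q * jtheta (q / z) Q * jtheta (q / z^2) Q"
proof -
  have Q: "0 < norm Q" "norm Q < 1" using q by (simp_all add: Q_def norm_power power_less_one_iff)
  have q0: "q \<noteq> 0" and Q0: "Q \<noteq> 0" using q by (auto simp: Q_def)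
  have reflect: "jtheta (q^2) Q = jtheta q Q" "jtheta (q^2 * z) Q = jtheta (q / z) Q"
    "jtheta (q^2 * z^2) Q = jtheta (q / z^2) Q"
    using jtheta_cube_reflect[OF q0, of 1] jtheta_cube_reflect[OF q0, of z] jtheta_cube_reflect[OF q0, of "z^2"] z
    by (simp_all add: Q_def)
  have inverse: "jtheta (z / q) Q = - (z / q) * jtheta (q / z) Q" "jtheta (1 / q) Q = - jtheta q Q / q"
    using jtheta_inverse[OF Q(2) Q0, of "q / z"] jtheta_inverse[OF Q(2) Q0 q0] q0 z by simp_all
  have cq: "jtheta q Q \<noteq> 0" using jtheta_cube_base_nonzero[OF q] by (simp add: Q_def)
  have m: "m_defined q Q (z / q)" "m_defined q Q (q * z)" "m_defined q Q z"
    unfolding m_defined_iff[OF Q] using j q0 z inverse reflect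
    by (auto simp: mult.assoc[symmetric] power2_eq_square)
  have args: "q * z / (z / q) = q^2" "q * (z / q) = z" "z * (q * z) = q * z^2" "z / (q * z) = 1 / q"
    "q * (q * z) = q^2 * z" "q^2 * z * z = q^2 * z^2" "z / (z / q) = q" "z * z = z^2"
    using q0 z by (simp_all add: field_simps power2_eq_square)
  have nonzero: "jtheta (q * z / (z / q)) Q \<noteq> 0" "jtheta (z / (q * z)) Q \<noteq> 0" "jtheta (z / (z / q)) Q \<noteq> 0"
    unfolding args reflect inverse using cq q0 by auto
  have "z / q * jtheta q Q * jtheta (q * z^2) Q * jtheta z Q * jtheta (q * z) Q
      + q * z * (- jtheta q Q / q) * jtheta (q / z^2) Q * (- (z / q) * jtheta (q / z) Q) * jtheta z Q
      = z / q * jtheta q Q * jtheta (z^2) Q * jtheta (q * z) Q * jtheta (q / z) Q"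
    using jtheta_three_term[OF Q m nonzero] by (simp only: args reflect inverse)
  then have "z / q * jtheta q Q * (jtheta z Q * jtheta (q * z) Q * jtheta (q * z^2) Q
        + z * jtheta z Q * jtheta (q / z) Q * jtheta (q / z^2) Q)
      = z / q * jtheta q Q * (jtheta (z^2) Q * jtheta (q * z) Q * jtheta (q / z) Q)"
    using q0 by (simp add: field_simps)
  then show ?thesis using q0 z cq by simp
qed

lemma appell_zdiff_cubic_values:
  fixes q z :: complex
  defines "Q \<equiv> q^3"
  defines "J \<equiv> qpoch Q Q ^ 3" and "c \<equiv> jtheta q Q"
  assumes q: "norm q < 1" "q \<noteq> 0" and z: "z \<noteq> 0"
    and a: "jtheta z Q \<noteq> 0" "jtheta (q * z) Q \<noteq> 0" "jtheta (q / z) Q \<noteq> 0"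
    and b: "jtheta (z^2) Q \<noteq> 0" "jtheta (q * z^2) Q \<noteq> 0" "jtheta (q / z^2) Q \<noteq> 0"
  shows "appell_zdiff q Q (inverse z) z = - J * c * jtheta (z^2) Q / (jtheta z Q ^ 2 * jtheta (q * z) Q * jtheta (q / z) Q)"
      (is ?Z1)
    and "appell_zdiff (z^3 * q) Q (inverse z ^ 2) (inverse z) = z * J * c / (jtheta (z^2) Q * jtheta (q * z) Q * jtheta (q * z^2) Q)"
      (is ?Z2)
    and "appell_zdiff (inverse z ^ 3 * q) Q z (z^2) = z * J * c / (jtheta (z^2) Q * jtheta (q / z) Q * jtheta (q / z^2) Q)"
      (is ?Z3)
proof -
  have Q: "norm Q < 1" "Q \<noteq> 0" using q by (auto simp: Q_def norm_power power_less_one_iff)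
  have inv: "jtheta (inverse z) Q = - jtheta z Q / z" "jtheta (inverse z ^ 2) Q = - jtheta (z^2) Q / z^2"
    using jtheta_inverse[OF Q, of z] jtheta_inverse[OF Q, of "z^2"] z
    by (simp_all add: inverse_eq_divide power_one_over)
  have args: "z / inverse z = z^2" "q * inverse z * z = q" "q * inverse z = q / z"
    "inverse z / inverse z ^ 2 = z" "z^3 * q * inverse z ^ 2 * inverse z = q"
    "z^3 * q * inverse z ^ 2 = q * z" "z^3 * q * inverse z = q * z^2"
    "z^2 / z = z" "inverse z ^ 3 * q * z * z^2 = q" "inverse z ^ 3 * q * z = q / z^2"
    "inverse z ^ 3 * q * z^2 = q / z"
    using z by (simp_all add: field_simps power2_eq_square power3_eq_cube)
  show ?Z1 ?Z2 ?Z3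
    unfolding appell_zdiff_def args inv J_def c_def using z a b by (simp_all add: field_simps power2_eq_square)
qed

lemma appell_zdiff_cubic_combination:
  fixes q z :: complex
  defines "Q \<equiv> q^3"
  assumes q: "0 < norm q" "norm q < 1" and z: "z \<noteq> 0"
    and a: "jtheta z Q \<noteq> 0" "jtheta (q * z) Q \<noteq> 0" "jtheta (q / z) Q \<noteq> 0"
    and b: "jtheta (z^2) Q \<noteq> 0" "jtheta (q * z^2) Q \<noteq> 0" "jtheta (q / z^2) Q \<noteq> 0"
  shows "z * jtheta z q * appell_zdiff q Q (inverse z) z
      + jtheta (z^2) q * (z * appell_zdiff (z^3 * q) Q (inverse z ^ 2) (inverse z)
        + appell_zdiff (inverse z ^ 3 * q) Q z (z^2)) = 0"
proof -
  have q0: "q \<noteq> 0" using q by auto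
  have "z^2 \<noteq> 0" using z by simp
  have J: "qpoch Q Q \<noteq> 0" using qpoch_self_nonzero q by (simp add: Q_def norm_power power_less_one_iff)
  have "jtheta (z^2) Q * jtheta (q * z) Q * jtheta (q / z) Q
      = jtheta z Q * jtheta (q * z) Q * jtheta (q * z^2) Q + z * jtheta z Q * jtheta (q / z) Q * jtheta (q / z^2) Q"
    using jtheta_cubic_three_term[OF q z] a by (simp add: Q_def)
  then have three: "jtheta (z^2) Q / jtheta z Q
      = jtheta (q * z^2) Q / jtheta (q / z) Q + z * jtheta (q / z^2) Q / jtheta (q * z) Q"
    using a by (simp add: field_simps)
  have "z * jtheta z q * appell_zdiff q Q (inverse z) z
      + jtheta (z^2) q * (z * appell_zdiff (z^3 * q) Q (inverse z ^ 2) (inverse z)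
        + appell_zdiff (inverse z ^ 3 * q) Q z (z^2))
      = qpoch q q * jtheta q Q * z * (jtheta (q * z^2) Q / jtheta (q / z) Q
        + z * jtheta (q / z^2) Q / jtheta (q * z) Q - jtheta (z^2) Q / jtheta z Q)"
    unfolding appell_zdiff_cubic_values[OF q(2) q0 z a[unfolded Q_def] b[unfolded Q_def], folded Q_def]
      jtheta_dissect3[OF q(2) q0 z, folded Q_def] jtheta_dissect3[OF q(2) q0 \<open>z^2 \<noteq> 0\<close>, folded Q_def]
    using z a b J by (simp add: field_simps power2_eq_square)
  also have "\<dots> = 0" unfolding three by simp
  finally show ?thesis .
qed

theorem lemma2p3:
  fixes q z :: complex
  assumes "0 < norm q" and "norm q < 1" and "z \<noteq> 0"
    and "m_defined q (q^3) z"
    and "m_defined (z^3 * q) (q^3) (inverse z)"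
    and "m_defined q (q^3) (inverse z)"
    and "m_defined (inverse z ^ 3 * q) (q^3) z"
    and "m_defined (inverse z ^ 3 * q) (q^3) (z^2)"
    and "m_defined (z^3 * q) (q^3) (inverse z ^ 2)"
  shows "z * jtheta (inverse z * q) q * appell_m q (q^3) z
       + z * jtheta (inverse z ^ 2 * q) q * appell_m (z^3 * q) (q^3) (inverse z)
       + z^2 * jtheta (z * q) q * appell_m q (q^3) (inverse z)
       + z^2 * jtheta (z^2 * q) q * appell_m (inverse z ^ 3 * q) (q^3) z
     = - jtheta (z^2) q * appell_m (inverse z ^ 3 * q) (q^3) (z^2)
       + z * jtheta (z^2) q * appell_m (z^3 * q) (q^3) (inverse z ^ 2)"
proof -
  have q: "0 < norm q" "norm q < 1" "q \<noteq> 0" using assms(1,2) by auto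
  have Q: "0 < norm (q^3)" "norm (q^3) < 1" using q by (simp_all add: norm_power power_less_one_iff)
  note m = assms(4-9)[unfolded m_defined_iff[OF Q]]
  have args: "z^3 * q * inverse z = q * z^2" "inverse z ^ 3 * q * z = q / z^2"
    "z / inverse z = z^2" "inverse z / inverse z ^ 2 = z" "z^2 / z = z"
    using assms(3) by (simp_all add: field_simps power2_eq_square power3_eq_cube)
  have nonzero: "jtheta (q * z^2) (q^3) \<noteq> 0" "jtheta (q / z^2) (q^3) \<noteq> 0"
    "jtheta (z / inverse z) (q^3) \<noteq> 0" "jtheta (inverse z / inverse z ^ 2) (q^3) \<noteq> 0"
    "jtheta (z^2 / z) (q^3) \<noteq> 0"
    unfolding args using m[unfolded args] by auto
  have "z * jtheta z q * (appell_m q (q^3) z - appell_m q (q^3) (inverse z))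
      + jtheta (z^2) q * (z * (appell_m (z^3 * q) (q^3) (inverse z) - appell_m (z^3 * q) (q^3) (inverse z ^ 2))
        + (appell_m (inverse z ^ 3 * q) (q^3) (z^2) - appell_m (inverse z ^ 3 * q) (q^3) z)) = 0"
    using appell_zdiff_cubic_combination[OF q(1,2) assms(3)] m nonzero
      appell_m_change_z[OF Q assms(6,4)] appell_m_change_z[OF Q assms(9,5)]
      appell_m_change_z[OF Q assms(7,8)]
    by (simp add: divide_inverse mult.commute)
  moreover have "jtheta (inverse z * q) q = jtheta z q" "jtheta (inverse z ^ 2 * q) q = jtheta (z^2) q"
    "jtheta (z * q) q = - jtheta z q / z" "jtheta (z^2 * q) q = - jtheta (z^2) q / z^2"
    using jtheta_reflect[OF q(3), of z] jtheta_reflect[OF q(3), of "z^2"]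
      jtheta_mult[OF q(2,3), of z] jtheta_mult[OF q(2,3), of "z^2"] assms(3)
    by (simp_all add: divide_inverse mult.commute power_inverse)
  ultimately show ?thesis using assms(3) by (simp add: field_simps power2_eq_square)
qed

end
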